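(* The set of all $Z$-reguli of $\mathcal G$ is a single orbit under the natural action of the group $\operatorname{Aut}_K(V)$ of $K$-linear automorphisms of $V$. Moreover, given any three mutually distant elements of $\mathcal G$, there is a unique $Z$-regulus containing them.
   Context: $K$ is a (not necessarily commutative) field with centre $Z$, and $V$ is a left vector space over $K$ of arbitrary (possibly infinite) dimension with $\dim V>2$. $\mathcal G:=\{X\le V\mid X\cong V/X\}$, assumed nonempty. Points are $1$-dimensional and lines $2$-dimensional subspaces; two subspaces meet if they have a common point. $X,Y\in\mathcal G$ are distant if $V=X\oplus Y$. A $Z$-regulus is a subset $\mathcal R\subseteq\mathcal G$ such that (R1) its elements are mutually distant and $|\mathcal R|\ge3$; (R2) if a line meets three mutually distinct elements of $\mathcal R$ then it meets all elements of $\mathcal R$; (R3) $\mathcal R$ is not properly contained in any subset of $\mathcal G$ satisfying (R1) and (R2). *)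

theory Defs
  imports Main
begin

text \<open>A left vector space over a (not necessarily commutative) field K,
  given by the carrier type 'v (V = UNIV) and a scalar multiplication sm.\<close>

definition left_vs :: "('k::division_ring \<Rightarrow> 'v::ab_group_add \<Rightarrow> 'v) \<Rightarrow> bool" where
  "left_vs sm \<longleftrightarrow>
     (\<forall>a x y. sm a (x + y) = sm a x + sm a y) \<and>
     (\<forall>a b x. sm (a + b) x = sm a x + sm b x) \<and>
     (\<forall>a b x. sm (a * b) x = sm a (sm b x)) \<and>
     (\<forall>x. sm 1 x = x)"

definition subspace :: "('k::division_ring \<Rightarrow> 'v::ab_group_add \<Rightarrow> 'v) \<Rightarrow> 'v set \<Rightarrow> bool" where
  "subspace sm X \<longleftrightarrow> 0 \<in> X \<and> (\<forall>x\<in>X. \<forall>y\<in>X. x + y \<in> X) \<and> (\<forall>a. \<forall>x\<in>X. sm a x \<in> X)"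

definition klinear :: "('k::division_ring \<Rightarrow> 'v::ab_group_add \<Rightarrow> 'v) \<Rightarrow> ('v \<Rightarrow> 'v) \<Rightarrow> bool" where
  "klinear sm f \<longleftrightarrow> (\<forall>x y. f (x + y) = f x + f y) \<and> (\<forall>a x. f (sm a x) = sm a (f x))"

definition Aut :: "('k::division_ring \<Rightarrow> 'v::ab_group_add \<Rightarrow> 'v) \<Rightarrow> ('v \<Rightarrow> 'v) set" where
  "Aut sm = {f. klinear sm f \<and> bij f}"

definition dim_gt_2 :: "('k::division_ring \<Rightarrow> 'v::ab_group_add \<Rightarrow> 'v) \<Rightarrow> bool" where
  "dim_gt_2 sm \<longleftrightarrow> (\<exists>u v w. \<forall>a b c. sm a u + sm b v + sm c w = 0 \<longrightarrow> a = 0 \<and> b = 0 \<and> c = 0)"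

text \<open>The quotient V/X: its elements are the cosets v + X, with addition and
  scalar multiplication defined via representatives.\<close>
definition coset :: "'v::ab_group_add set \<Rightarrow> 'v \<Rightarrow> 'v set" where
  "coset X v = (\<lambda>x. v + x) ` X"

definition quotient_space :: "'v::ab_group_add set \<Rightarrow> 'v set set" where
  "quotient_space X = range (coset X)"

definition iso_to_quotient :: "('k::division_ring \<Rightarrow> 'v::ab_group_add \<Rightarrow> 'v) \<Rightarrow> 'v set \<Rightarrow> bool" where
  "iso_to_quotient sm X \<longleftrightarrow>
     (\<exists>f. bij_betw f X (quotient_space X) \<and>
          (\<forall>a\<in>X. \<forall>b\<in>X. \<forall>u\<in>f a. \<forall>w\<in>f b. f (a + b) = coset X (u + w)) \<and>
          (\<forall>c. \<forall>a\<in>X. \<forall>u\<in>f a. f (sm c a) = coset X (sm c u)))"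

definition Gr :: "('k::division_ring \<Rightarrow> 'v::ab_group_add \<Rightarrow> 'v) \<Rightarrow> 'v set set" where
  "Gr sm = {X. subspace sm X \<and> iso_to_quotient sm X}"

definition is_point :: "('k::division_ring \<Rightarrow> 'v::ab_group_add \<Rightarrow> 'v) \<Rightarrow> 'v set \<Rightarrow> bool" where
  "is_point sm P \<longleftrightarrow> (\<exists>v. v \<noteq> 0 \<and> P = range (\<lambda>c. sm c v))"

definition is_line :: "('k::division_ring \<Rightarrow> 'v::ab_group_add \<Rightarrow> 'v) \<Rightarrow> 'v set \<Rightarrow> bool" where
  "is_line sm L \<longleftrightarrow> (\<exists>u v. (\<forall>a b. sm a u + sm b v = 0 \<longrightarrow> a = 0 \<and> b = 0) \<and>
                         L = {sm a u + sm b v | a b. True})"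

definition meets :: "('k::division_ring \<Rightarrow> 'v::ab_group_add \<Rightarrow> 'v) \<Rightarrow> 'v set \<Rightarrow> 'v set \<Rightarrow> bool" where
  "meets sm X Y \<longleftrightarrow> (\<exists>P. is_point sm P \<and> P \<subseteq> X \<and> P \<subseteq> Y)"

definition distant :: "'v::ab_group_add set \<Rightarrow> 'v set \<Rightarrow> bool" where
  "distant X Y \<longleftrightarrow> X \<inter> Y = {0} \<and> {x + y | x y. x \<in> X \<and> y \<in> Y} = UNIV"

definition R1 :: "('k::division_ring \<Rightarrow> 'v::ab_group_add \<Rightarrow> 'v) \<Rightarrow> 'v set set \<Rightarrow> bool" where
  "R1 sm R \<longleftrightarrow> (\<forall>X\<in>R. \<forall>Y\<in>R. X \<noteq> Y \<longrightarrow> distant X Y) \<and>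
               (\<exists>A B C. A \<in> R \<and> B \<in> R \<and> C \<in> R \<and> A \<noteq> B \<and> A \<noteq> C \<and> B \<noteq> C)"

definition R2 :: "('k::division_ring \<Rightarrow> 'v::ab_group_add \<Rightarrow> 'v) \<Rightarrow> 'v set set \<Rightarrow> bool" where
  "R2 sm R \<longleftrightarrow> (\<forall>L. is_line sm L \<longrightarrow>
      (\<forall>A\<in>R. \<forall>B\<in>R. \<forall>C\<in>R. A \<noteq> B \<and> A \<noteq> C \<and> B \<noteq> C \<and>
          meets sm L A \<and> meets sm L B \<and> meets sm L C \<longrightarrow> (\<forall>X\<in>R. meets sm L X)))"

definition Z_regulus :: "('k::division_ring \<Rightarrow> 'v::ab_group_add \<Rightarrow> 'v) \<Rightarrow> 'v set set \<Rightarrow> bool" where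
  "Z_regulus sm R \<longleftrightarrow> R \<subseteq> Gr sm \<and> R1 sm R \<and> R2 sm R \<and>
     \<not> (\<exists>S. R \<subset> S \<and> S \<subseteq> Gr sm \<and> R1 sm S \<and> R2 sm S)"

end

theory Submission
  imports Defs
begin

unbundle cardinal_syntax

locale left_vector_space =
  fixes sm :: "'k::division_ring \<Rightarrow> 'v::ab_group_add \<Rightarrow> 'v" (infixr "*s" 75)
  assumes left_vs: "left_vs sm"
begin

lemma scale_right_distrib: "a *s (x + y) = a *s x + a *s y"
  and scale_left_distrib: "(a + b) *s x = a *s x + b *s x"
  and scale_scale: "(a * b) *s x = a *s (b *s x)"
  and scale_one [simp]: "1 *s x = x"
  using left_vs unfolding left_vs_def by blast+

lemma scale_zero_left [simp]: "0 *s x = 0"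
  by (metis add_0 add_cancel_right_right scale_left_distrib)

lemma scale_zero_right [simp]: "a *s 0 = 0"
  by (metis add_0 add_cancel_right_right scale_right_distrib)

lemma scale_minus_left: "(- a) *s x = - (a *s x)"
  using scale_left_distrib[of "-a" a x] by (simp add: eq_neg_iff_add_eq_0)

lemma scale_minus_right: "a *s (- x) = - (a *s x)"
  using scale_right_distrib[of a "-x" x] by (simp add: eq_neg_iff_add_eq_0)

lemma scale_left_diff_distrib: "(a - b) *s x = a *s x - b *s x"
  using scale_left_distrib[of a "-b" x] by (simp add: scale_minus_left)

lemma scale_right_diff_distrib: "a *s (x - y) = a *s x - a *s y"
  using scale_right_distrib[of a x "-y"] by (simp add: scale_minus_right)

lemma scale_minus_one [simp]: "(- 1) *s x = - x"
  by (simp add: scale_minus_left)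

lemma scale_inverse_scale: "a \<noteq> 0 \<Longrightarrow> inverse a *s (a *s x) = x"
  by (metis scale_scale left_inverse scale_one)

lemma scale_scale_inverse: "a \<noteq> 0 \<Longrightarrow> a *s (inverse a *s x) = x"
  by (metis scale_scale right_inverse scale_one)

lemma scale_eq_0_iff [simp]: "a *s x = 0 \<longleftrightarrow> a = 0 \<or> x = 0"
  by (metis scale_inverse_scale scale_zero_left scale_zero_right)

lemma scale_cancel_left: "x \<noteq> 0 \<Longrightarrow> a *s x = b *s x \<longleftrightarrow> a = b"
  by (metis scale_left_diff_distrib scale_eq_0_iff eq_iff_diff_eq_0)

lemma subspace_0: "subspace sm X \<Longrightarrow> 0 \<in> X"
  and subspace_add: "subspace sm X \<Longrightarrow> x \<in> X \<Longrightarrow> y \<in> X \<Longrightarrow> x + y \<in> X"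
  and subspace_scale: "subspace sm X \<Longrightarrow> x \<in> X \<Longrightarrow> a *s x \<in> X"
  unfolding subspace_def by blast+

lemma subspace_neg: "subspace sm X \<Longrightarrow> x \<in> X \<Longrightarrow> - x \<in> X"
  by (metis scale_minus_one subspace_scale)

lemma subspace_diff: "subspace sm X \<Longrightarrow> x \<in> X \<Longrightarrow> y \<in> X \<Longrightarrow> x - y \<in> X"
  by (metis diff_conv_add_uminus subspace_add subspace_neg)

lemma subspaceI:
  assumes "0 \<in> X" "\<And>x y. x \<in> X \<Longrightarrow> y \<in> X \<Longrightarrow> x + y \<in> X" "\<And>a x. x \<in> X \<Longrightarrow> a *s x \<in> X"
  shows "subspace sm X"
  using assms unfolding subspace_def by blast

lemma subspace_zero: "subspace sm {0}"
  by (rule subspaceI) auto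

definition span :: "'v set \<Rightarrow> 'v set" where
  "span S = \<Inter>{U. subspace sm U \<and> S \<subseteq> U}"

lemma subspace_span: "subspace sm (span S)"
  unfolding span_def subspace_def by blast

lemma span_superset: "S \<subseteq> span S"
  unfolding span_def by blast

lemma span_base: "x \<in> S \<Longrightarrow> x \<in> span S"
  using span_superset by blast

lemma span_minimal: "subspace sm U \<Longrightarrow> S \<subseteq> U \<Longrightarrow> span S \<subseteq> U"
  unfolding span_def by blast

lemma span_mono: "S \<subseteq> T \<Longrightarrow> span S \<subseteq> span T"
  by (meson span_minimal span_superset subspace_span order_trans)

lemmas span_0 = subspace_0[OF subspace_span]
  and span_add = subspace_add[OF subspace_span]
  and span_scale = subspace_scale[OF subspace_span]
  and span_diff = subspace_diff[OF subspace_span]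

lemma span_eq_subspace: "subspace sm U \<Longrightarrow> span U = U"
  by (simp add: span_minimal span_superset subset_antisym)

lemma span_empty: "span {} = {0}"
  using span_minimal[OF subspace_zero] span_0 by blast

lemma span_insert: "span (insert v T) = {a *s v + t | a t. t \<in> span T}"
proof
  let ?R = "{a *s v + t | a t. t \<in> span T}"
  have "subspace sm ?R"
  proof (rule subspaceI)
    show "0 \<in> ?R" using span_0 by force
    fix x y assume "x \<in> ?R" "y \<in> ?R"
    then obtain a t b u where "x = a *s v + t" "t \<in> span T" "y = b *s v + u" "u \<in> span T" by blast
    hence "x + y = (a + b) *s v + (t + u)" "t + u \<in> span T"
      by (simp_all add: scale_left_distrib span_add algebra_simps)
    thus "x + y \<in> ?R" by blast
  next
    fix c x assume "x \<in> ?R"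
    then obtain a t where "x = a *s v + t" "t \<in> span T" by blast
    hence "c *s x = (c * a) *s v + c *s t" "c *s t \<in> span T"
      by (simp_all add: scale_right_distrib scale_scale span_scale)
    thus "c *s x \<in> ?R" by blast
  qed
  moreover have "v \<in> ?R"
    using span_0 by (intro CollectI exI[of _ 1] exI[of _ 0]) simp
  moreover have "x \<in> ?R" if "x \<in> T" for x
    using that span_base[of x T] by (intro CollectI exI[of _ 0] exI[of _ x]) simp
  ultimately show "span (insert v T) \<subseteq> ?R" by (intro span_minimal) auto
next
  have "v \<in> span (insert v T)" "span T \<subseteq> span (insert v T)"
    by (simp_all add: span_base span_mono subset_insertI)
  thus "{a *s v + t | a t. t \<in> span T} \<subseteq> span (insert v T)"
    by (auto intro: span_add span_scale)
qed

lemma span_singleton: "span {v} = range (\<lambda>a. a *s v)"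
  using span_insert[of v "{}"] by (auto simp: span_empty)

lemma span_pair: "span {u, v} = {a *s u + b *s v | a b. True}"
  using span_insert[of u "{v}"] by (auto simp: span_singleton)

lemma span_redundant: "v \<in> span T \<Longrightarrow> span (insert v T) = span T"
  by (metis insert_subset span_mono span_superset span_minimal subspace_span subset_antisym
      subset_insertI)

lemma span_exchange:
  assumes "w \<in> span (insert v T)" "w \<notin> span T"
  shows "span (insert w T) = span (insert v T)"
proof -
  obtain a t where w: "w = a *s v + t" "t \<in> span T" using assms(1) span_insert by blast
  have "a \<noteq> 0" using w assms(2) by auto
  hence "v = inverse a *s w + (- inverse a) *s t"
    by (simp add: w scale_right_distrib scale_inverse_scale scale_minus_left)
  hence "v \<in> span (insert w T)" using w(2) span_insert[of w T] by (auto intro: span_scale)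
  hence "span (insert v (insert w T)) = span (insert w T)" by (rule span_redundant)
  moreover have "span (insert w (insert v T)) = span (insert v T)"
    using assms(1) by (rule span_redundant)
  ultimately show ?thesis by (simp add: insert_commute)
qed

lemma span_Un: "span (S \<union> T) = {x + y | x y. x \<in> span S \<and> y \<in> span T}"
proof
  let ?R = "{x + y | x y. x \<in> span S \<and> y \<in> span T}"
  have "subspace sm ?R"
  proof (rule subspaceI)
    show "0 \<in> ?R" using span_0 by force
    fix x y assume "x \<in> ?R" "y \<in> ?R"
    then obtain a t b u where "x = a + t" "a \<in> span S" "t \<in> span T"
      "y = b + u" "b \<in> span S" "u \<in> span T" by blast
    hence "x + y = (a + b) + (t + u)" "a + b \<in> span S" "t + u \<in> span T"
      by (simp_all add: span_add algebra_simps)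
    thus "x + y \<in> ?R" by blast
  next
    fix c x assume "x \<in> ?R"
    then obtain a t where "x = a + t" "a \<in> span S" "t \<in> span T" by blast
    hence "c *s x = c *s a + c *s t" "c *s a \<in> span S" "c *s t \<in> span T"
      by (simp_all add: scale_right_distrib span_scale)
    thus "c *s x \<in> ?R" by blast
  qed
  moreover have "x \<in> ?R" if "x \<in> S" for x
    using that span_base[of x S] span_0[of T] by (intro CollectI exI[of _ x] exI[of _ 0]) simp
  moreover have "x \<in> ?R" if "x \<in> T" for x
    using that span_base[of x T] span_0[of S] by (intro CollectI exI[of _ 0] exI[of _ x]) simp
  ultimately show "span (S \<union> T) \<subseteq> ?R" by (intro span_minimal) blast+
next
  show "{x + y | x y. x \<in> span S \<and> y \<in> span T} \<subseteq> span (S \<union> T)"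
    using span_mono[of S "S \<union> T"] span_mono[of T "S \<union> T"] span_add by blast
qed

lemma span_finite_subset:
  assumes "x \<in> span S"
  shows "\<exists>F. finite F \<and> F \<subseteq> S \<and> x \<in> span F"
proof -
  let ?R = "\<Union>{span F | F. finite F \<and> F \<subseteq> S}"
  have "subspace sm ?R"
  proof (rule subspaceI)
    show "0 \<in> ?R" using span_0 by blast
    fix x y assume "x \<in> ?R" "y \<in> ?R"
    then obtain F G where "finite F" "F \<subseteq> S" "x \<in> span F" "finite G" "G \<subseteq> S" "y \<in> span G"
      by blast
    moreover have "span F \<subseteq> span (F \<union> G)" "span G \<subseteq> span (F \<union> G)" by (simp_all add: span_mono)
    ultimately have "x + y \<in> span (F \<union> G)" "finite (F \<union> G)" "F \<union> G \<subseteq> S"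
      by (auto intro: span_add)
    thus "x + y \<in> ?R" by blast
  next
    fix a x assume "x \<in> ?R"
    thus "a *s x \<in> ?R" using span_scale by blast
  qed
  moreover have "S \<subseteq> ?R"
  proof
    fix x assume "x \<in> S"
    hence "x \<in> span {x}" "finite {x}" "{x} \<subseteq> S" by (auto simp: span_base)
    thus "x \<in> ?R" by blast
  qed
  ultimately have "span S \<subseteq> ?R" by (rule span_minimal)
  thus ?thesis using assms by blast
qed

definition independent :: "'v set \<Rightarrow> bool" where
  "independent S \<longleftrightarrow> (\<forall>v\<in>S. v \<notin> span (S - {v}))"

lemma independent_not_in_span: "independent S \<Longrightarrow> v \<in> S \<Longrightarrow> T \<subseteq> S - {v} \<Longrightarrow> v \<notin> span T"
  unfolding independent_def using span_mono by blast

lemma independent_zero: "independent S \<Longrightarrow> 0 \<notin> S"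
  unfolding independent_def using span_0 by blast

lemma independent_empty: "independent {}"
  unfolding independent_def by blast

lemma independent_insert:
  assumes S: "independent S" and v: "v \<notin> span S"
  shows "independent (insert v S)"
  unfolding independent_def
proof
  fix w assume w: "w \<in> insert v S"
  show "w \<notin> span (insert v S - {w})"
  proof (cases "w = v")
    case True
    have "insert v S - {w} \<subseteq> S" using True by blast
    thus ?thesis using v span_mono True by blast
  next
    case False
    hence wS: "w \<in> S" using w by blast
    have eq: "insert v S - {w} = insert v (S - {w})" using False by blast
    have nw: "w \<notin> span (S - {w})" using S wS unfolding independent_def by blast
    show ?thesis
    proof
      assume "w \<in> span (insert v S - {w})"
      hence "w \<in> span (insert v (S - {w}))" by (simp only: eq)
      hence "span (insert w (S - {w})) = span (insert v (S - {w}))"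
        by (rule span_exchange[OF _ nw])
      moreover have "insert w (S - {w}) = S" using wS by blast
      ultimately have "v \<in> span S" using span_base[of v "insert v (S - {w})"] by simp
      thus False using v by contradiction
    qed
  qed
qed

lemma independent_extend_basis:
  assumes U: "subspace sm U" and S: "independent S" "S \<subseteq> U"
  shows "\<exists>B. S \<subseteq> B \<and> B \<subseteq> U \<and> independent B \<and> span B = U"
proof -
  let ?A = "{B. S \<subseteq> B \<and> B \<subseteq> U \<and> independent B}"
  have "\<exists>M\<in>?A. \<forall>X\<in>?A. M \<subseteq> X \<longrightarrow> X = M"
  proof (rule subset_Zorn_nonempty)
    show "?A \<noteq> {}" using S by blast
    fix C assume C: "C \<noteq> {}" "subset.chain ?A C"
    have "independent (\<Union>C)"
      unfolding independent_def
    proof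
      fix v assume v: "v \<in> \<Union>C"
      show "v \<notin> span (\<Union>C - {v})"
      proof
        assume "v \<in> span (\<Union>C - {v})"
        then obtain F where F: "finite F" "F \<subseteq> \<Union>C - {v}" "v \<in> span F"
          using span_finite_subset by blast
        have "finite (insert v F)" "insert v F \<subseteq> \<Union>C" using F v by auto
        then obtain M where "M \<in> C" "insert v F \<subseteq> M"
          using finite_subset_Union_chain[OF _ _ C] by blast
        hence "independent M" "v \<in> M" "F \<subseteq> M - {v}" using C F unfolding subset_chain_def by auto
        thus False using independent_not_in_span F(3) by blast
      qed
    qed
    thus "\<Union>C \<in> ?A" using C unfolding subset_chain_def by blast
  qed
  then obtain B where B: "S \<subseteq> B" "B \<subseteq> U" "independent B"
    and max: "\<forall>X\<in>?A. B \<subseteq> X \<longrightarrow> X = B" by blast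
  have "U \<subseteq> span B"
  proof
    fix u assume "u \<in> U"
    show "u \<in> span B"
    proof (rule ccontr)
      assume "u \<notin> span B"
      hence "insert u B \<in> ?A" using B \<open>u \<in> U\<close> independent_insert by blast
      hence "insert u B = B" using max by blast
      thus False using \<open>u \<notin> span B\<close> span_superset by blast
    qed
  qed
  with span_minimal[OF U B(2)] have "span B = U" by blast
  thus ?thesis using B by blast
qed

subsection \<open>Dimension\<close>

lemma independent_card_le:
  assumes "finite S"
  shows "independent T \<Longrightarrow> T \<subseteq> span S \<Longrightarrow> finite T \<and> card T \<le> card S"
  using assms
proof (induction S arbitrary: T rule: finite_induct)
  case empty
  then have "T \<subseteq> {0}" by (simp add: span_empty)
  with independent_zero[OF empty.prems(1)] have "T = {}" by blast
  thus ?case by simp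
next
  case (insert s S)
  show ?case
  proof (cases "T \<subseteq> span S")
    case True
    with insert.IH insert.prems have "finite T \<and> card T \<le> card S" by blast
    thus ?thesis using insert.hyps by simp
  next
    case False
    then obtain t0 where t0: "t0 \<in> T" "t0 \<notin> span S" by blast
    have "t0 \<in> span (insert s S)" using insert.prems t0 by blast
    hence spT: "T \<subseteq> span (insert t0 S)" using span_exchange t0(2) insert.prems by simp
    txt \<open>Project \<open>T - {t0}\<close> along \<open>t0\<close> into \<open>span S\<close> and apply the induction hypothesis.\<close>
    define g where "g t = (SOME u. u \<in> span S \<and> (\<exists>d. t = d *s t0 + u))" for t
    have g: "g t \<in> span S \<and> (\<exists>d. t = d *s t0 + g t)" if "t \<in> T" for t
    proof -
      have "\<exists>u. u \<in> span S \<and> (\<exists>d. t = d *s t0 + u)" using spT that span_insert by blast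
      thus ?thesis unfolding g_def by (rule someI_ex)
    qed
    let ?T' = "T - {t0}"
    have g_in_span: "g t \<in> span (T - {t'})"
      if tt: "t \<in> ?T'" "t' \<in> T" "t' \<noteq> t" "t' \<noteq> t0" for t t'
    proof -
      obtain d where "t = d *s t0 + g t" using g tt by blast
      hence "g t = t - d *s t0" by (simp add: algebra_simps)
      moreover have "t \<in> span (T - {t'})" "t0 \<in> span (T - {t'})" using tt t0 by (auto intro: span_base)
      ultimately show ?thesis by (simp add: span_diff span_scale)
    qed
    have inj: "inj_on g ?T'"
    proof (rule inj_onI)
      fix t1 t2 assume a: "t1 \<in> ?T'" "t2 \<in> ?T'" "g t1 = g t2"
      obtain d1 where d1: "t1 = d1 *s t0 + g t1" using g a by blast
      show "t1 = t2"
      proof (rule ccontr)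
        assume ne: "t1 \<noteq> t2"
        have "g t2 \<in> span (T - {t1})" using g_in_span[of t2 t1] a ne by blast
        moreover have "t0 \<in> span (T - {t1})" using a t0 by (intro span_base) blast
        ultimately have "t1 \<in> span (T - {t1})" using d1 a(3) by (metis span_add span_scale)
        thus False using insert.prems(1) a unfolding independent_def by blast
      qed
    qed
    have "independent (g ` ?T')"
      unfolding independent_def
    proof
      fix w assume "w \<in> g ` ?T'"
      then obtain t where t: "t \<in> ?T'" "w = g t" by blast
      show "w \<notin> span (g ` ?T' - {w})"
      proof
        assume w: "w \<in> span (g ` ?T' - {w})"
        have "g ` ?T' - {w} \<subseteq> span (T - {t})" using g_in_span t by auto
        hence "span (g ` ?T' - {w}) \<subseteq> span (T - {t})" by (simp add: span_minimal subspace_span)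
        hence "g t \<in> span (T - {t})" using w t by blast
        moreover obtain d where "t = d *s t0 + g t" using g t by blast
        moreover have "t0 \<in> span (T - {t})" using t t0 by (intro span_base) auto
        ultimately have "t \<in> span (T - {t})" by (metis span_add span_scale)
        thus False using insert.prems(1) t unfolding independent_def by blast
      qed
    qed
    moreover have "g ` ?T' \<subseteq> span S" using g by blast
    ultimately have "finite (g ` ?T') \<and> card (g ` ?T') \<le> card S" using insert.IH by blast
    hence "finite ?T'" "card ?T' \<le> card S" using inj finite_image_iff card_image by metis+
    moreover have "finite T" using \<open>finite ?T'\<close> by simp
    moreover have "card T = card ?T' + 1" using card_Suc_Diff1[OF \<open>finite T\<close> t0(1)] by simp
    ultimately show ?thesis using insert.hyps by simp
  qed
qed

lemma independent_card_of_le: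
  assumes "independent B1" "B1 \<subseteq> span B2" "B2 \<subseteq> span B1" "infinite B2"
  shows "|B1| \<le>o |B2|"
proof -
  define F where "F b = (SOME F. finite F \<and> F \<subseteq> B1 \<and> b \<in> span F)" for b
  have F: "finite (F b) \<and> F b \<subseteq> B1 \<and> b \<in> span (F b)" if "b \<in> B2" for b
  proof -
    have "\<exists>F. finite F \<and> F \<subseteq> B1 \<and> b \<in> span F" using assms(3) that span_finite_subset by blast
    thus ?thesis unfolding F_def by (rule someI_ex)
  qed
  let ?W = "\<Union>b\<in>B2. F b"
  have "B2 \<subseteq> span ?W" using F span_mono by blast
  hence "span B2 \<subseteq> span ?W" by (simp add: span_minimal subspace_span)
  hence B1W: "B1 \<subseteq> span ?W" using assms(2) by blast
  have "B1 \<subseteq> ?W"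
  proof
    fix x assume x: "x \<in> B1"
    show "x \<in> ?W"
    proof (rule ccontr)
      assume "x \<notin> ?W"
      hence "?W \<subseteq> B1 - {x}" using F by blast
      thus False using independent_not_in_span[OF assms(1) x] B1W x by blast
    qed
  qed
  hence "|B1| \<le>o |?W|" by (rule card_of_mono1)
  also have "|?W| \<le>o |B2|"
  proof (rule card_of_UNION_ordLeq_infinite[OF assms(4)])
    show "|B2| \<le>o |B2|" by (simp add: ordLeq_refl card_of_Card_order)
    show "\<forall>i\<in>B2. |F i| \<le>o |B2|"
    proof
      fix i assume "i \<in> B2"
      hence "finite (F i)" using F by blast
      hence "|F i| <o |B2|"
        using finite_ordLess_infinite[OF card_of_Well_order card_of_Well_order] assms(4)
        by (simp add: Field_card_of)
      thus "|F i| \<le>o |B2|" by (rule ordLess_imp_ordLeq)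
    qed
  qed
  finally show ?thesis .
qed

lemma bases_equipotent:
  assumes "independent B1" "independent B2" "span B1 = span B2"
  shows "\<exists>f. bij_betw f B1 B2"
proof -
  have B12: "B1 \<subseteq> span B2" "B2 \<subseteq> span B1" using assms span_superset by auto
  show ?thesis
  proof (cases "finite B1 \<or> finite B2")
    case True
    hence "finite B1 \<and> finite B2 \<and> card B1 = card B2"
      using independent_card_le[OF _ assms(1) B12(1)] independent_card_le[OF _ assms(2) B12(2)]
      by fastforce
    thus ?thesis by (metis finite_same_card_bij)
  next
    case False
    hence "|B1| =o |B2|"
      using independent_card_of_le[OF assms(1) B12] independent_card_of_le[OF assms(2) B12(2,1)]
      by (simp add: ordIso_iff_ordLeq)
    thus ?thesis using card_of_ordIso by blast
  qed
qed

lemma klinear_add: "klinear sm f \<Longrightarrow> f (x + y) = f x + f y"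
  and klinear_scale: "klinear sm f \<Longrightarrow> f (a *s x) = a *s f x"
  unfolding klinear_def by blast+

lemma klinear_0: "klinear sm f \<Longrightarrow> f 0 = 0"
  by (metis klinear_scale scale_zero_left)

lemma klinear_diff: "klinear sm f \<Longrightarrow> f (x - y) = f x - f y"
  by (metis diff_conv_add_uminus klinear_add klinear_scale scale_minus_one)

lemma klinearI:
  "(\<And>x y. f (x + y) = f x + f y) \<Longrightarrow> (\<And>a x. f (a *s x) = a *s f x) \<Longrightarrow> klinear sm f"
  unfolding klinear_def by blast

lemma klinear_comp: "klinear sm f \<Longrightarrow> klinear sm g \<Longrightarrow> klinear sm (f \<circ> g)"
  by (rule klinearI) (simp_all add: klinear_add klinear_scale)

lemma subspace_image:
  assumes f: "klinear sm f" and X: "subspace sm X" shows "subspace sm (f ` X)"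
proof (rule subspaceI)
  show "0 \<in> f ` X" using klinear_0[OF f] subspace_0[OF X] by (metis image_eqI)
  fix x y assume "x \<in> f ` X" "y \<in> f ` X"
  then obtain u v where "u \<in> X" "v \<in> X" "x = f u" "y = f v" by blast
  thus "x + y \<in> f ` X" using klinear_add[OF f, of u v] subspace_add[OF X] by (metis image_eqI)
next
  fix a x assume "x \<in> f ` X"
  then obtain u where "u \<in> X" "x = f u" by blast
  thus "a *s x \<in> f ` X" using klinear_scale[OF f, of a u] subspace_scale[OF X] by (metis image_eqI)
qed

lemma subspace_vimage: "klinear sm f \<Longrightarrow> subspace sm Y \<Longrightarrow> subspace sm (f -` Y)"
  by (rule subspaceI) (auto simp: klinear_0 klinear_add klinear_scale subspace_0 subspace_add subspace_scale)

lemma klinear_image_span: "klinear sm f \<Longrightarrow> f ` span S = span (f ` S)"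
proof
  assume f: "klinear sm f"
  have "S \<subseteq> f -` span (f ` S)" using span_superset by blast
  with subspace_vimage[OF f subspace_span] have "span S \<subseteq> f -` span (f ` S)"
    by (rule span_minimal)
  thus "f ` span S \<subseteq> span (f ` S)" by blast
  have "f ` S \<subseteq> f ` span S" using span_superset by blast
  with subspace_image[OF f subspace_span] show "span (f ` S) \<subseteq> f ` span S"
    by (rule span_minimal)
qed

lemma klinear_eq_on_span:
  assumes "klinear sm f" "klinear sm g" "\<And>x. x \<in> S \<Longrightarrow> f x = g x" "x \<in> span S"
  shows "f x = g x"
proof -
  have "subspace sm {x. f x = g x}"
    by (rule subspaceI) (use assms in \<open>auto simp: klinear_0 klinear_add klinear_scale\<close>)
  hence "span S \<subseteq> {x. f x = g x}" using assms(3) by (intro span_minimal) auto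
  thus ?thesis using assms(4) by blast
qed

lemma klinear_inj_onI:
  assumes "klinear sm f" "subspace sm X" "\<And>x. x \<in> X \<Longrightarrow> f x = 0 \<Longrightarrow> x = 0"
  shows "inj_on f X"
proof (rule inj_onI)
  fix x y assume "x \<in> X" "y \<in> X" "f x = f y"
  hence "f (x - y) = 0" "x - y \<in> X" using assms by (auto simp: klinear_diff subspace_diff)
  thus "x = y" by (metis assms(3) eq_iff_diff_eq_0)
qed

lemma independent_image:
  assumes f: "klinear sm f" and inj: "inj_on f (span S)" and S: "independent S"
  shows "independent (f ` S)"
  unfolding independent_def
proof
  fix w assume "w \<in> f ` S"
  then obtain v where v: "v \<in> S" "w = f v" by blast
  have "f ` S - {w} = f ` (S - {v})"
    using v inj span_superset by (auto simp: inj_on_def)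
  hence span_eq: "span (f ` S - {w}) = f ` span (S - {v})" by (simp add: klinear_image_span[OF f])
  show "w \<notin> span (f ` S - {w})"
  proof
    assume "w \<in> span (f ` S - {w})"
    then obtain u where u: "u \<in> span (S - {v})" "f u = f v" using span_eq v by auto
    have "u \<in> span S" "v \<in> span S" using u span_mono[of "S - {v}" S] v span_superset by auto
    hence "u = v" using inj u unfolding inj_on_def by blast
    thus False using u S v unfolding independent_def by blast
  qed
qed

definition support :: "('v \<Rightarrow> 'k) \<Rightarrow> 'v set" where
  "support c = {x. c x \<noteq> 0}"

definition lincomb :: "('v \<Rightarrow> 'v) \<Rightarrow> ('v \<Rightarrow> 'k) \<Rightarrow> 'v set \<Rightarrow> 'v" where
  "lincomb h c G = (\<Sum>x\<in>G. c x *s h x)"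

lemma scale_sum: "a *s sum f G = (\<Sum>x\<in>G. a *s f x)"
  by (induction G rule: infinite_finite_induct) (auto simp: scale_right_distrib)

lemma lincomb_support:
  assumes "finite G" "support c \<subseteq> G"
  shows "lincomb h c G = lincomb h c (support c)"
  unfolding lincomb_def using assms
  by (intro sum.mono_neutral_right) (auto simp: support_def)

lemma lincomb_add: "lincomb h (\<lambda>x. c x + d x) G = lincomb h c G + lincomb h d G"
  unfolding lincomb_def by (simp add: scale_left_distrib sum.distrib)

lemma lincomb_diff: "lincomb h (\<lambda>x. c x - d x) G = lincomb h c G - lincomb h d G"
  unfolding lincomb_def by (simp add: scale_left_diff_distrib sum_subtractf)

lemma lincomb_scale: "lincomb h (\<lambda>x. a * c x) G = a *s lincomb h c G"
  unfolding lincomb_def by (simp add: scale_sum scale_scale)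

lemma support_add: "support (\<lambda>x. c x + d x) \<subseteq> support c \<union> support d"
  and support_scale: "support (\<lambda>x. a * c x) \<subseteq> support c"
  and support_indicator: "support (\<lambda>x. if x = e then 1 else 0) = {e}"
  by (auto simp: support_def)

lemma lincomb_in_span: "G \<subseteq> S \<Longrightarrow> lincomb id c G \<in> span S"
proof (induction G rule: infinite_finite_induct)
  case (insert x F)
  thus ?case by (simp add: lincomb_def span_add span_scale span_base)
qed (simp_all add: lincomb_def span_0)

definition represents :: "'v set \<Rightarrow> ('v \<Rightarrow> 'k) \<Rightarrow> 'v \<Rightarrow> bool" where
  "represents E c v \<longleftrightarrow> finite (support c) \<and> support c \<subseteq> E \<and> v = lincomb id c (support c)"

lemma represents_add:
  assumes c: "represents E c v" and d: "represents E d w"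
  shows "represents E (\<lambda>x. c x + d x) (v + w)"
proof -
  let ?e = "\<lambda>x. c x + d x"
  let ?G = "support c \<union> support d"
  have G: "finite ?G" "?G \<subseteq> E" using c d unfolding represents_def by auto
  have "v + w = lincomb id c ?G + lincomb id d ?G"
    using c d lincomb_support[OF G(1)] unfolding represents_def by simp
  also have "\<dots> = lincomb id ?e ?G" by (simp only: lincomb_add)
  also have "\<dots> = lincomb id ?e (support ?e)" using lincomb_support[OF G(1) support_add] .
  finally have "v + w = lincomb id ?e (support ?e)" .
  thus ?thesis unfolding represents_def using G support_add[of c d] by (blast intro: finite_subset)
qed

lemma represents_scale:
  assumes c: "represents E c v"
  shows "represents E (\<lambda>x. a * c x) (a *s v)"
proof -
  have G: "finite (support c)" using c unfolding represents_def by blast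
  have "a *s v = lincomb id (\<lambda>x. a * c x) (support c)"
    using c unfolding represents_def lincomb_scale by simp
  also have "\<dots> = lincomb id (\<lambda>x. a * c x) (support (\<lambda>x. a * c x))"
    using lincomb_support[OF G support_scale] .
  finally have "a *s v = \<dots>" .
  thus ?thesis using c support_scale[of a c] unfolding represents_def by (blast intro: finite_subset)
qed

lemma represents_base: "e \<in> E \<Longrightarrow> represents E (\<lambda>x. if x = e then 1 else 0) e"
  unfolding represents_def support_indicator by (simp add: lincomb_def)

lemma represents_exists:
  assumes "x \<in> span S"
  shows "\<exists>c. represents S c x"
proof -
  let ?R = "{x. \<exists>c. represents S c x}"
  have "subspace sm ?R"
  proof (rule subspaceI)
    have "represents S (\<lambda>_. 0) 0" by (simp add: represents_def support_def lincomb_def)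
    thus "0 \<in> ?R" by blast
  next
    fix x y assume "x \<in> ?R" "y \<in> ?R"
    then obtain c d where "represents S c x" "represents S d y" by blast
    thus "x + y \<in> ?R" using represents_add by blast
  next
    fix a x assume "x \<in> ?R"
    then obtain c where "represents S c x" by blast
    thus "a *s x \<in> ?R" using represents_scale by blast
  qed
  moreover have "S \<subseteq> ?R"
  proof
    fix x assume "x \<in> S"
    thus "x \<in> ?R" using represents_base[of x S] by blast
  qed
  ultimately show ?thesis using span_minimal assms by blast
qed

lemma independent_lincomb_eq_0:
  assumes E: "independent E" and G: "finite G" "G \<subseteq> E" and z: "lincomb id c G = 0"
  shows "\<forall>x\<in>G. c x = 0"
proof (rule ccontr)
  assume "\<not> (\<forall>x\<in>G. c x = 0)"
  then obtain x0 where x0: "x0 \<in> G" "c x0 \<noteq> 0" by blast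
  have "lincomb id c G = c x0 *s x0 + lincomb id c (G - {x0})"
    unfolding lincomb_def using G x0 by (simp add: sum.remove)
  hence "c x0 *s x0 = - lincomb id c (G - {x0})" using z by (simp add: eq_neg_iff_add_eq_0)
  hence "x0 = (- inverse (c x0)) *s lincomb id c (G - {x0})"
    using x0(2) by (metis scale_inverse_scale scale_minus_left scale_minus_right)
  moreover have "lincomb id c (G - {x0}) \<in> span (E - {x0})" using G by (intro lincomb_in_span) auto
  ultimately have "x0 \<in> span (E - {x0})" by (metis span_scale)
  thus False using E x0 G unfolding independent_def by blast
qed

lemma represents_unique:
  assumes E: "independent E" and c: "represents E c v" and d: "represents E d v"
  shows "c = d"
proof
  fix x
  let ?G = "support c \<union> support d"
  have G: "finite ?G" "?G \<subseteq> E" using c d unfolding represents_def by blast+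
  have "lincomb id c ?G = v" "lincomb id d ?G = v"
    using c d lincomb_support[OF G(1)] unfolding represents_def by auto
  hence "lincomb id (\<lambda>x. c x - d x) ?G = 0" by (simp only: lincomb_diff diff_self)
  hence "\<forall>x\<in>?G. c x - d x = 0" by (rule independent_lincomb_eq_0[OF E G])
  moreover have "x \<notin> ?G \<Longrightarrow> c x = d x" by (simp add: support_def)
  ultimately show "c x = d x" by auto
qed

definition coords :: "'v set \<Rightarrow> 'v \<Rightarrow> 'v \<Rightarrow> 'k" where
  "coords E v = (THE c. represents E c v)"

lemma coords_eq: "independent E \<Longrightarrow> represents E c v \<Longrightarrow> coords E v = c"
  unfolding coords_def using represents_unique by blast

lemma represents_coords: "independent E \<Longrightarrow> v \<in> span E \<Longrightarrow> represents E (coords E v) v"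
  using represents_exists coords_eq by metis

definition linear_extension :: "'v set \<Rightarrow> ('v \<Rightarrow> 'v) \<Rightarrow> 'v \<Rightarrow> 'v" where
  "linear_extension E h v = lincomb h (coords E v) (support (coords E v))"

context
  fixes E :: "'v set"
  assumes E: "independent E" "span E = UNIV"
begin

lemma linear_extension_add: "linear_extension E h (v + w) = linear_extension E h v + linear_extension E h w"
proof -
  have cf: "represents E (coords E v) v" for v using represents_coords E by blast
  let ?c = "coords E v" and ?d = "coords E w"
  let ?G = "support ?c \<union> support ?d"
  have G: "finite ?G" using cf unfolding represents_def by auto
  have "coords E (v + w) = (\<lambda>x. ?c x + ?d x)" using coords_eq[OF E(1) represents_add[OF cf cf]] .
  hence "linear_extension E h (v + w) = lincomb h (\<lambda>x. ?c x + ?d x) ?G"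
    unfolding linear_extension_def using lincomb_support[OF G support_add] by simp
  also have "\<dots> = linear_extension E h v + linear_extension E h w"
    unfolding linear_extension_def lincomb_add using lincomb_support[OF G] by simp
  finally show ?thesis .
qed

lemma linear_extension_scale: "linear_extension E h (a *s v) = a *s linear_extension E h v"
proof -
  have cf: "represents E (coords E v) v" using represents_coords E by blast
  let ?c = "coords E v"
  have G: "finite (support ?c)" using cf unfolding represents_def by auto
  have "coords E (a *s v) = (\<lambda>x. a * ?c x)" using coords_eq[OF E(1) represents_scale[OF cf]] .
  thus ?thesis unfolding linear_extension_def
    using lincomb_support[OF G support_scale] by (simp add: lincomb_scale)
qed

lemma klinear_linear_extension: "klinear sm (linear_extension E h)"
  by (rule klinearI) (rule linear_extension_add, rule linear_extension_scale)

lemma linear_extension_base: "e \<in> E \<Longrightarrow> linear_extension E h e = h e"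
  using coords_eq[OF E(1) represents_base]
  by (simp add: linear_extension_def support_indicator lincomb_def)

lemma linear_extension_eq_0:
  assumes h: "inj_on h E" "independent (h ` E)" and v: "linear_extension E h v = 0"
  shows "v = 0"
proof -
  let ?c = "coords E v"
  let ?S = "support ?c"
  have S: "finite ?S" "?S \<subseteq> E" "v = lincomb id ?c ?S"
    using represents_coords E unfolding represents_def by auto
  have injS: "inj_on h ?S" using h(1) S(2) inj_on_subset by blast
  have "lincomb id (\<lambda>y. ?c (inv_into ?S h y)) (h ` ?S) = lincomb h ?c ?S"
    unfolding lincomb_def using injS by (simp add: sum.reindex)
  also have "\<dots> = 0" using v unfolding linear_extension_def .
  finally have "\<forall>y\<in>h ` ?S. ?c (inv_into ?S h y) = 0"
    using independent_lincomb_eq_0[OF h(2), of "h ` ?S"] S by blast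
  hence "\<forall>x\<in>?S. ?c x = 0" using injS by auto
  hence "?S = {}" by (auto simp: support_def)
  thus "v = 0" using S(3) by (simp add: lincomb_def)
qed

end

lemma Aut_extend_basis_bij:
  assumes E0: "independent E0" "span E0 = UNIV" and E: "independent E" "span E = UNIV"
    and h: "bij_betw h E0 E"
  shows "\<exists>F\<in>Aut sm. \<forall>e\<in>E0. F e = h e"
proof (intro bexI ballI)
  let ?F = "linear_extension E0 h"
  have k: "klinear sm ?F" by (rule klinear_linear_extension[OF E0])
  have hE: "inj_on h E0" "independent (h ` E0)" "h ` E0 = E"
    using h E(1) by (simp_all add: bij_betw_def)
  have "subspace sm UNIV" by (rule subspaceI) auto
  hence "inj ?F" using klinear_inj_onI[OF k] linear_extension_eq_0[OF E0 hE(1,2)] by blast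
  moreover have "?F ` E0 = E" using linear_extension_base[OF E0] hE(3) by auto
  hence "surj ?F" using klinear_image_span[OF k, of E0] E0(2) E(2) by simp
  ultimately show "?F \<in> Aut sm" using k by (simp add: Aut_def bij_def)
  show "?F e = h e" if "e \<in> E0" for e using linear_extension_base[OF E0 that] .
qed

lemma distant_commute:
  assumes "distant X Y" shows "distant Y X"
proof -
  have "v \<in> {y + x | y x. y \<in> Y \<and> x \<in> X}" for v
  proof -
    obtain x y where "x \<in> X" "y \<in> Y" "v = x + y" using assms unfolding distant_def by blast
    hence "v = y + x" "y \<in> Y" "x \<in> X" by (simp_all add: add.commute)
    thus ?thesis by blast
  qed
  thus ?thesis using assms unfolding distant_def by blast
qed

lemma distantD: "distant X Y \<Longrightarrow> \<exists>x y. x \<in> X \<and> y \<in> Y \<and> v = x + y"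
  unfolding distant_def by blast

lemma distant_inter: "distant X Y \<Longrightarrow> x \<in> X \<Longrightarrow> x \<in> Y \<Longrightarrow> x = 0"
  unfolding distant_def by blast

lemma distant_self: "distant X X \<Longrightarrow> X = {0}"
  unfolding distant_def by blast

lemma distantI:
  assumes "\<And>v. v \<in> X \<Longrightarrow> v \<in> Y \<Longrightarrow> v = 0" "subspace sm X" "subspace sm Y"
    "\<And>v. \<exists>x y. x \<in> X \<and> y \<in> Y \<and> v = x + y"
  shows "distant X Y"
  unfolding distant_def using assms subspace_0 by blast

definition proj :: "'v set \<Rightarrow> 'v set \<Rightarrow> 'v \<Rightarrow> 'v" where
  "proj X Y v = (THE x. x \<in> X \<and> v - x \<in> Y)"

context
  fixes X Y :: "'v set"
  assumes XY: "distant X Y" and X: "subspace sm X" and Y: "subspace sm Y"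
begin

lemma distant_decomp_unique:
  assumes "x1 \<in> X" "x2 \<in> X" "y1 \<in> Y" "y2 \<in> Y" "x1 + y1 = x2 + y2"
  shows "x1 = x2 \<and> y1 = y2"
proof -
  have "x1 - x2 = y2 - y1" using assms(5) by (simp add: algebra_simps)
  moreover have "x1 - x2 \<in> X" "y2 - y1 \<in> Y" using assms X Y by (auto simp: subspace_diff)
  ultimately have "x1 - x2 = 0" using distant_inter[OF XY] by metis
  thus ?thesis using assms(5) by simp
qed

lemma proj_eq:
  assumes "x \<in> X" "v - x \<in> Y" shows "proj X Y v = x"
proof (unfold proj_def, rule the_equality)
  show "x \<in> X \<and> v - x \<in> Y" using assms ..
  fix x' assume "x' \<in> X \<and> v - x' \<in> Y"
  thus "x' = x" using distant_decomp_unique[of x' x "v - x'" "v - x"] assms by simp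
qed

lemma proj: "proj X Y v \<in> X \<and> v - proj X Y v \<in> Y"
proof -
  obtain x y where "x \<in> X" "y \<in> Y" "v = x + y" using distantD[OF XY] by blast
  thus ?thesis using proj_eq[of x v] by (simp add: add_diff_cancel_left')
qed

lemma proj_fixes: "x \<in> X \<Longrightarrow> proj X Y x = x"
  using proj_eq subspace_0[OF Y] by simp

lemma klinear_proj: "klinear sm (proj X Y)"
proof (rule klinearI)
  fix v w
  have "(v + w) - (proj X Y v + proj X Y w) = (v - proj X Y v) + (w - proj X Y w)"
    by (simp add: algebra_simps)
  thus "proj X Y (v + w) = proj X Y v + proj X Y w"
    using proj proj_eq subspace_add[OF X] subspace_add[OF Y] by metis
next
  fix a v
  have "a *s v - a *s proj X Y v = a *s (v - proj X Y v)" by (simp add: scale_right_diff_distrib)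
  thus "proj X Y (a *s v) = a *s proj X Y v"
    using proj proj_eq subspace_scale[OF X] subspace_scale[OF Y] by metis
qed

end

lemma independent_Un_distant_aux:
  assumes XY: "distant X Y" and X: "subspace sm X" and Y: "subspace sm Y"
    and S1: "independent S1" "S1 \<subseteq> X" and S2: "S2 \<subseteq> Y" and v: "v \<in> S1"
  shows "v \<notin> span (S1 \<union> S2 - {v})"
proof
  assume vs: "v \<in> span (S1 \<union> S2 - {v})"
  have "v \<noteq> 0" using independent_zero[OF S1(1)] v by blast
  hence "v \<notin> S2" using v S1(2) S2 distant_inter[OF XY] by blast
  hence "S1 \<union> S2 - {v} = (S1 - {v}) \<union> S2" by blast
  hence "v \<in> {x + y | x y. x \<in> span (S1 - {v}) \<and> y \<in> span S2}"
    using vs span_Un[of "S1 - {v}" S2] by simp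
  then obtain x y where xy: "x \<in> span (S1 - {v})" "y \<in> span S2" "v = x + y" by blast
  have "span (S1 - {v}) \<subseteq> X" using S1(2) by (intro span_minimal[OF X]) blast
  moreover have "span S2 \<subseteq> Y" by (rule span_minimal[OF Y S2])
  ultimately have "x \<in> X" "y \<in> Y" using xy by blast+
  moreover have "v + 0 = x + y" using xy(3) by simp
  ultimately have "v = x"
    using distant_decomp_unique[OF XY X Y _ _ subspace_0[OF Y]] v S1(2) by blast
  thus False using xy(1) S1(1) v unfolding independent_def by blast
qed

lemma independent_Un_distant:
  assumes XY: "distant X Y" and X: "subspace sm X" and Y: "subspace sm Y"
    and S1: "independent S1" "S1 \<subseteq> X" and S2: "independent S2" "S2 \<subseteq> Y"
  shows "independent (S1 \<union> S2)"
  unfolding independent_def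
proof
  fix v assume "v \<in> S1 \<union> S2"
  moreover have "S2 \<union> S1 = S1 \<union> S2" by blast
  ultimately show "v \<notin> span (S1 \<union> S2 - {v})"
    using independent_Un_distant_aux[OF XY X Y S1 S2(2), of v]
      independent_Un_distant_aux[OF distant_commute[OF XY] Y X S2 S1(2), of v] by auto
qed

text \<open>Zorn's lemma applied to the subspaces meeting \<open>X\<close> trivially.\<close>
lemma subspace_complement:
  assumes X: "subspace sm X"
  shows "\<exists>Y. subspace sm Y \<and> distant X Y"
proof -
  let ?A = "{Y. subspace sm Y \<and> X \<inter> Y = {0}}"
  have "\<exists>M\<in>?A. \<forall>Z\<in>?A. M \<subseteq> Z \<longrightarrow> Z = M"
  proof (rule subset_Zorn_nonempty)
    show "?A \<noteq> {}" using subspace_zero subspace_0[OF X] by blast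
    fix C assume C: "C \<noteq> {}" "subset.chain ?A C"
    have sub: "\<And>Y. Y \<in> C \<Longrightarrow> subspace sm Y" "\<And>Y. Y \<in> C \<Longrightarrow> X \<inter> Y = {0}"
      and ch: "\<And>Y Z. Y \<in> C \<Longrightarrow> Z \<in> C \<Longrightarrow> Y \<subseteq> Z \<or> Z \<subseteq> Y"
      using C unfolding subset_chain_def by blast+
    have "subspace sm (\<Union>C)"
    proof (rule subspaceI)
      show "0 \<in> \<Union>C" using C(1) sub subspace_0 by blast
    next
      fix x y assume "x \<in> \<Union>C" "y \<in> \<Union>C"
      then obtain Y Z where YZ: "Y \<in> C" "Z \<in> C" "x \<in> Y" "y \<in> Z" by blast
      thus "x + y \<in> \<Union>C" using ch[OF YZ(1,2)] sub subspace_add by blast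
    next
      fix a x assume "x \<in> \<Union>C"
      thus "a *s x \<in> \<Union>C" using sub subspace_scale by blast
    qed
    moreover have "X \<inter> \<Union>C = {0}"
    proof
      show "X \<inter> \<Union>C \<subseteq> {0}" using sub by blast
      obtain Y where "Y \<in> C" using C by blast
      thus "{0} \<subseteq> X \<inter> \<Union>C" using sub subspace_0 X by blast
    qed
    ultimately show "\<Union>C \<in> ?A" by blast
  qed
  then obtain M where M: "subspace sm M" "X \<inter> M = {0}"
    and max: "\<forall>Z\<in>?A. M \<subseteq> Z \<longrightarrow> Z = M" by blast
  have "\<exists>x y. x \<in> X \<and> y \<in> M \<and> v = x + y" for v
  proof (rule ccontr)
    assume nv: "\<not> (\<exists>x y. x \<in> X \<and> y \<in> M \<and> v = x + y)"
    let ?Y = "span (insert v M)"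
    have Y: "?Y = {a *s v + t | a t. t \<in> M}" using span_insert[of v M] span_eq_subspace[OF M(1)] by simp
    have "X \<inter> ?Y \<subseteq> {0}"
    proof
      fix x assume "x \<in> X \<inter> ?Y"
      then obtain a t where x: "x \<in> X" "t \<in> M" "x = a *s v + t" using Y by blast
      show "x \<in> {0}"
      proof (cases "a = 0")
        case True
        thus ?thesis using x M by auto
      next
        case False
        have "v = inverse a *s x + inverse a *s (- t)"
          using False x by (simp add: scale_right_distrib[symmetric] scale_inverse_scale)
        moreover have "inverse a *s x \<in> X" "inverse a *s (- t) \<in> M"
          using x X M by (auto simp: subspace_scale subspace_neg)
        ultimately show ?thesis using nv by blast
      qed
    qed
    hence "X \<inter> ?Y = {0}" using subspace_0[OF X] span_0 by blast
    hence "?Y \<in> ?A" using subspace_span by blast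
    moreover have "M \<subseteq> ?Y" using span_superset by blast
    ultimately have "?Y = M" using max by blast
    hence "v \<in> M" using span_superset by blast
    hence "v = 0 + v" "0 \<in> X" using subspace_0[OF X] by auto
    thus False using nv \<open>v \<in> M\<close> by blast
  qed
  moreover have "v = 0" if "v \<in> X" "v \<in> M" for v using that M(2) by blast
  ultimately have "distant X M" by (intro distantI[OF _ X M(1)])
  thus ?thesis using M by blast
qed

definition linear_on :: "'v set \<Rightarrow> ('v \<Rightarrow> 'v) \<Rightarrow> bool" where
  "linear_on X g \<longleftrightarrow>
     (\<forall>x\<in>X. \<forall>y\<in>X. g (x + y) = g x + g y) \<and> (\<forall>a. \<forall>x\<in>X. g (a *s x) = a *s g x)"

lemma klinear_imp_linear_on: "klinear sm g \<Longrightarrow> linear_on X g"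
  unfolding linear_on_def by (simp add: klinear_add klinear_scale)

lemma linear_on_UNIV: "linear_on UNIV g \<longleftrightarrow> klinear sm g"
  unfolding linear_on_def klinear_def by blast

lemma linear_on_inv_into:
  assumes "linear_on X f" "subspace sm X" "inj_on f X"
  shows "linear_on (f ` X) (inv_into X f)"
  unfolding linear_on_def
proof (intro conjI ballI allI)
  fix x y assume "x \<in> f ` X" "y \<in> f ` X"
  then obtain u v where uv: "u \<in> X" "v \<in> X" "x = f u" "y = f v" by blast
  hence "x + y = f (u + v)" "u + v \<in> X" using assms unfolding linear_on_def
    by (auto intro: subspace_add)
  thus "inv_into X f (x + y) = inv_into X f x + inv_into X f y" using uv assms(3) by simp
next
  fix a x assume "x \<in> f ` X"
  then obtain u where u: "u \<in> X" "x = f u" by blast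
  hence "a *s x = f (a *s u)" "a *s u \<in> X" using assms unfolding linear_on_def
    by (auto intro: subspace_scale)
  thus "inv_into X f (a *s x) = a *s inv_into X f x" using u assms(3) by simp
qed

lemma linear_on_extend:
  assumes "distant X Y" "subspace sm X" "subspace sm Y" "linear_on X g"
  shows "klinear sm (g \<circ> proj X Y)" "\<And>x. x \<in> X \<Longrightarrow> (g \<circ> proj X Y) x = g x"
proof -
  have "proj X Y v \<in> X" for v using proj[OF assms(1-3)] by blast
  thus "klinear sm (g \<circ> proj X Y)"
    using assms(4) klinear_proj[OF assms(1-3)] unfolding linear_on_def
    by (intro klinearI) (simp_all add: klinear_add klinear_scale)
  show "(g \<circ> proj X Y) x = g x" if "x \<in> X" for x using proj_fixes[OF assms(1-3) that] by simp
qed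

subsection \<open>The set \<open>\<G>\<close>\<close>

lemma mem_coset: "w \<in> coset X u \<longleftrightarrow> w - u \<in> X"
  unfolding coset_def by (metis (no_types, lifting) add_diff_cancel_left' diff_add_cancel image_iff
      add.commute)

lemma coset_eq_iff:
  assumes X: "subspace sm X" shows "coset X u = coset X w \<longleftrightarrow> u - w \<in> X"
proof
  assume "coset X u = coset X w"
  moreover have "u \<in> coset X u" by (simp add: mem_coset subspace_0[OF X])
  ultimately show "u - w \<in> X" using mem_coset by blast
next
  assume uw: "u - w \<in> X"
  have "z - u \<in> X \<longleftrightarrow> z - w \<in> X" for z
    using subspace_add[OF X _ uw, of "z - u"] subspace_diff[OF X _ uw, of "z - w"] by auto
  thus "coset X u = coset X w" by (auto simp: mem_coset)
qed

lemma quotient_space_eq_coset: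
  assumes X: "subspace sm X" and Q: "Q \<in> quotient_space X" and y: "y \<in> Q"
  shows "Q = coset X y"
proof -
  obtain u where u: "Q = coset X u" using Q unfolding quotient_space_def by blast
  hence "y - u \<in> X" using y mem_coset by blast
  thus ?thesis using u coset_eq_iff[OF X] by (metis minus_diff_eq subspace_neg[OF X])
qed

lemma Gr_intro:
  assumes X: "subspace sm X" and Y: "subspace sm Y" and XY: "distant X Y"
    and g: "linear_on X g" "inj_on g X" "g ` X = Y"
  shows "X \<in> Gr sm"
proof -
  define f where "f x = coset X (g x)" for x
  have "inj_on f X"
  proof (rule inj_onI)
    fix x1 x2 assume x: "x1 \<in> X" "x2 \<in> X" "f x1 = f x2"
    hence "g x1 - g x2 \<in> X" using coset_eq_iff[OF X] unfolding f_def by blast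
    moreover have "g x1 - g x2 \<in> Y" using x g(3) subspace_diff[OF Y] by blast
    ultimately have "g x1 - g x2 = 0" by (rule distant_inter[OF XY])
    thus "x1 = x2" using g(2) x unfolding inj_on_def by simp
  qed
  moreover have "f ` X = quotient_space X"
  proof
    show "f ` X \<subseteq> quotient_space X" unfolding f_def quotient_space_def by blast
    show "quotient_space X \<subseteq> f ` X"
    proof
      fix Q assume "Q \<in> quotient_space X"
      then obtain v where Q: "Q = coset X v" unfolding quotient_space_def by blast
      obtain x y where xy: "x \<in> X" "y \<in> Y" "v = x + y" using distantD[OF XY] by blast
      obtain x' where x': "x' \<in> X" "y = g x'" using xy g(3) by blast
      have "v - g x' \<in> X" using xy x' by simp
      hence "Q = f x'" unfolding Q f_def by (simp only: coset_eq_iff[OF X])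
      thus "Q \<in> f ` X" using x' by blast
    qed
  qed
  ultimately have bij: "bij_betw f X (quotient_space X)" unfolding bij_betw_def by blast
  have add: "f (a + b) = coset X (u + w)" if "a \<in> X" "b \<in> X" "u \<in> f a" "w \<in> f b" for a b u w
  proof -
    have "(u - g a) + (w - g b) \<in> X"
      using that subspace_add[OF X] unfolding f_def by (simp add: mem_coset)
    moreover have "(g a + g b) - (u + w) = - ((u - g a) + (w - g b))" by (simp add: algebra_simps)
    ultimately have "(g a + g b) - (u + w) \<in> X" using subspace_neg[OF X] by metis
    moreover have "g (a + b) = g a + g b" using g(1) that unfolding linear_on_def by blast
    ultimately show ?thesis unfolding f_def by (simp only: coset_eq_iff[OF X])
  qed
  have scale: "f (c *s a) = coset X (c *s u)" if "a \<in> X" "u \<in> f a" for c a u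
  proof -
    have "u - g a \<in> X" using that unfolding f_def by (simp add: mem_coset)
    hence "c *s (g a - u) \<in> X" using subspace_scale[OF X] subspace_neg[OF X] by (metis minus_diff_eq)
    hence "c *s g a - c *s u \<in> X" by (simp add: scale_right_diff_distrib)
    moreover have "g (c *s a) = c *s g a" using g(1) that unfolding linear_on_def by blast
    ultimately show ?thesis unfolding f_def by (simp only: coset_eq_iff[OF X])
  qed
  have "iso_to_quotient sm X" unfolding iso_to_quotient_def
    by (intro exI[of _ f] conjI bij ballI allI add scale)
  thus ?thesis unfolding Gr_def using X by blast
qed

lemma Gr_subspace: "X \<in> Gr sm \<Longrightarrow> subspace sm X"
  unfolding Gr_def by blast

text \<open>An isomorphism \<open>X \<cong> V/X\<close> composed with the isomorphism \<open>V/X \<cong> Y\<close> that picks the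
  representative in a complement \<open>Y\<close>.\<close>
lemma iso_to_quotient_complement:
  assumes X: "subspace sm X" and iso: "iso_to_quotient sm X"
    and Y: "subspace sm Y" and XY: "distant X Y"
  shows "\<exists>g. linear_on X g \<and> inj_on g X \<and> g ` X = Y"
proof -
  obtain f where bij: "bij_betw f X (quotient_space X)"
    and add: "\<forall>a\<in>X. \<forall>b\<in>X. \<forall>u\<in>f a. \<forall>w\<in>f b. f (a + b) = coset X (u + w)"
    and scale: "\<forall>c. \<forall>a\<in>X. \<forall>u\<in>f a. f (c *s a) = coset X (c *s u)"
    using iso unfolding iso_to_quotient_def by blast
  have self: "u \<in> coset X u" for u by (simp add: mem_coset subspace_0[OF X])
  have coset_inj: "y1 = y2" if "y1 \<in> Y" "y2 \<in> Y" "coset X y1 = coset X y2" for y1 y2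
  proof -
    have "y1 - y2 \<in> X" using that(3) coset_eq_iff[OF X] by simp
    moreover have "y1 - y2 \<in> Y" using subspace_diff[OF Y that(1,2)] .
    ultimately have "y1 - y2 = 0" by (rule distant_inter[OF XY])
    thus ?thesis by simp
  qed
  have unique: "\<exists>!y. y \<in> Y \<and> f x = coset X y" if x: "x \<in> X" for x
  proof -
    obtain v where v: "f x = coset X v"
      using bij_betw_apply[OF bij x] unfolding quotient_space_def by (rule rangeE)
    obtain x' y where xy: "x' \<in> X" "y \<in> Y" "v = x' + y" using distantD[OF XY] by blast
    have "v - y \<in> X" using xy by simp
    hence fx: "f x = coset X y" using v coset_eq_iff[OF X] by simp
    show ?thesis
    proof (rule ex1I[of _ y])
      show "y \<in> Y \<and> f x = coset X y" using xy(2) fx ..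
      fix y' assume "y' \<in> Y \<and> f x = coset X y'"
      thus "y' = y" using coset_inj[OF _ xy(2)] fx by simp
    qed
  qed
  define g where "g x = (THE y. y \<in> Y \<and> f x = coset X y)" for x
  have g: "g x \<in> Y" "f x = coset X (g x)" if "x \<in> X" for x
    using theI'[OF unique[OF that]] unfolding g_def by blast+
  have g_eq: "g x = y" if "x \<in> X" "y \<in> Y" "y \<in> f x" for x y
  proof -
    have "coset X (g x) = coset X y"
      using quotient_space_eq_coset[OF X bij_betw_apply[OF bij that(1)] that(3)] g(2)[OF that(1)]
      by simp
    thus ?thesis by (rule coset_inj[OF g(1)[OF that(1)] that(2)])
  qed
  have "linear_on X g"
    unfolding linear_on_def
  proof (intro conjI ballI allI)
    fix a b assume ab: "a \<in> X" "b \<in> X"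
    have "g a \<in> f a" "g b \<in> f b" using g(2) ab self by simp_all
    hence "f (a + b) = coset X (g a + g b)" using add ab by blast
    hence "g a + g b \<in> f (a + b)" using self by simp
    thus "g (a + b) = g a + g b"
      by (rule g_eq[OF subspace_add[OF X ab] subspace_add[OF Y g(1)[OF ab(1)] g(1)[OF ab(2)]]])
  next
    fix c a assume a: "a \<in> X"
    have "g a \<in> f a" using g(2) a self by simp
    hence "f (c *s a) = coset X (c *s g a)" using scale a by blast
    hence "c *s g a \<in> f (c *s a)" using self by simp
    thus "g (c *s a) = c *s g a"
      by (rule g_eq[OF subspace_scale[OF X a] subspace_scale[OF Y g(1)[OF a]]])
  qed
  moreover have "inj_on g X"
  proof (rule inj_onI)
    fix a b assume ab: "a \<in> X" "b \<in> X" "g a = g b"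
    hence "f a = f b" using g(2)[OF ab(1)] g(2)[OF ab(2)] by simp
    thus "a = b" using inj_onD[OF bij_betw_imp_inj_on[OF bij] _ ab(1,2)] by blast
  qed
  moreover have "Y \<subseteq> g ` X"
  proof
    fix y assume y: "y \<in> Y"
    have "coset X y \<in> f ` X" using bij unfolding bij_betw_def quotient_space_def by blast
    then obtain a where a: "a \<in> X" "f a = coset X y" by blast
    hence "y \<in> f a" using self by simp
    hence "g a = y" by (rule g_eq[OF a(1) y])
    thus "y \<in> g ` X" using a(1) by blast
  qed
  hence "g ` X = Y" using g by blast
  ultimately show ?thesis by blast
qed

lemma GrE:
  assumes "X \<in> Gr sm"
  obtains Y g where "subspace sm Y" "distant X Y" "klinear sm g" "inj_on g X" "g ` X = Y"
proof -
  have X: "subspace sm X" and iso: "iso_to_quotient sm X" using assms unfolding Gr_def by blast+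
  obtain Y where Y: "subspace sm Y" "distant X Y" using subspace_complement[OF X] by blast
  obtain g where g: "linear_on X g" "inj_on g X" "g ` X = Y"
    using iso_to_quotient_complement[OF X iso Y(1,2)] by blast
  note ext = linear_on_extend[OF Y(2) X Y(1) g(1)]
  have "inj_on (g \<circ> proj X Y) X = inj_on g X" by (rule inj_on_cong) (rule ext(2))
  moreover have "(g \<circ> proj X Y) ` X = g ` X" by (rule image_cong[OF refl ext(2)])
  ultimately show ?thesis using that[OF Y ext(1)] g(2,3) by simp
qed

lemma Aut_klinear: "f \<in> Aut sm \<Longrightarrow> klinear sm f"
  and Aut_inj: "f \<in> Aut sm \<Longrightarrow> inj f"
  and Aut_surj: "f \<in> Aut sm \<Longrightarrow> surj f"
  unfolding Aut_def bij_def by blast+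

lemma Aut_inv:
  assumes f: "f \<in> Aut sm" shows "inv f \<in> Aut sm"
proof -
  have "subspace sm UNIV" by (rule subspaceI) auto
  hence "linear_on (f ` UNIV) (inv f)"
    using linear_on_inv_into klinear_imp_linear_on[OF Aut_klinear[OF f]] Aut_inj[OF f] by blast
  hence "klinear sm (inv f)" using Aut_surj[OF f] linear_on_UNIV by simp
  moreover have "bij (inv f)" using f unfolding Aut_def by (simp add: bij_imp_bij_inv)
  ultimately show ?thesis unfolding Aut_def by blast
qed

lemma Aut_image_inv_image: "f \<in> Aut sm \<Longrightarrow> inv f ` f ` X = X"
  by (rule image_inv_f_f[OF Aut_inj])

lemma Aut_image_image_inv: "f \<in> Aut sm \<Longrightarrow> f ` inv f ` X = X"
  by (rule image_f_inv_f[OF Aut_surj])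

lemma Aut_distant:
  assumes f: "f \<in> Aut sm" and XY: "distant X Y"
  shows "distant (f ` X) (f ` Y)"
proof -
  have "f ` X \<inter> f ` Y = f ` (X \<inter> Y)" using image_Int[OF Aut_inj[OF f]] by simp
  hence "f ` X \<inter> f ` Y = {0}" using XY klinear_0[OF Aut_klinear[OF f]] unfolding distant_def by simp
  moreover have "v \<in> {x + y | x y. x \<in> f ` X \<and> y \<in> f ` Y}" for v
  proof -
    obtain x y where "x \<in> X" "y \<in> Y" "inv f v = x + y" using distantD[OF XY] by blast
    hence "v = f x + f y" "f x \<in> f ` X" "f y \<in> f ` Y"
      using klinear_add[OF Aut_klinear[OF f]] surj_f_inv_f[OF Aut_surj[OF f], of v] by auto
    thus ?thesis by blast
  qed
  ultimately show ?thesis unfolding distant_def by blast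
qed

lemma Aut_point:
  assumes f: "f \<in> Aut sm" and P: "is_point sm P" shows "is_point sm (f ` P)"
proof -
  obtain v where v: "v \<noteq> 0" "P = range (\<lambda>c. c *s v)" using P unfolding is_point_def by blast
  have "f ` P = range (\<lambda>c. c *s f v)"
    using v(2) klinear_scale[OF Aut_klinear[OF f]] by (simp add: image_image)
  moreover have "f v \<noteq> 0" using v(1) klinear_0[OF Aut_klinear[OF f]] Aut_inj[OF f] by (metis injD)
  ultimately show ?thesis unfolding is_point_def by blast
qed

lemma Aut_line:
  assumes f: "f \<in> Aut sm" and L: "is_line sm L" shows "is_line sm (f ` L)"
proof -
  have k: "klinear sm f" using f by (rule Aut_klinear)
  obtain u v where ind: "\<forall>a b. a *s u + b *s v = 0 \<longrightarrow> a = 0 \<and> b = 0"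
    and L: "L = {a *s u + b *s v | a b. True}" using L unfolding is_line_def by blast
  have fl: "f (a *s u + b *s v) = a *s f u + b *s f v" for a b
    using klinear_add[OF k] klinear_scale[OF k] by simp
  have "f ` L = {a *s f u + b *s f v | a b. True}"
  proof
    show "f ` L \<subseteq> {a *s f u + b *s f v | a b. True}" using fl L by blast
    show "{a *s f u + b *s f v | a b. True} \<subseteq> f ` L"
    proof
      fix z assume "z \<in> {a *s f u + b *s f v | a b. True}"
      then obtain a b where "z = f (a *s u + b *s v)" using fl by auto
      thus "z \<in> f ` L" using L by blast
    qed
  qed
  moreover have "a = 0 \<and> b = 0" if "a *s f u + b *s f v = 0" for a b
  proof -
    have "f (a *s u + b *s v) = f 0" using that fl klinear_0[OF k] by simp
    thus ?thesis using ind injD[OF Aut_inj[OF f]] by blast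
  qed
  ultimately show ?thesis unfolding is_line_def by blast
qed

lemma Aut_meets:
  assumes f: "f \<in> Aut sm" and M: "meets sm L X" shows "meets sm (f ` L) (f ` X)"
proof -
  obtain P where "is_point sm P" "P \<subseteq> L" "P \<subseteq> X" using M unfolding meets_def by blast
  hence "is_point sm (f ` P)" "f ` P \<subseteq> f ` L" "f ` P \<subseteq> f ` X" using Aut_point[OF f] by blast+
  thus ?thesis unfolding meets_def by blast
qed

lemma Aut_Gr:
  assumes f: "f \<in> Aut sm" and X: "X \<in> Gr sm" shows "f ` X \<in> Gr sm"
proof -
  obtain Y g where Y: "subspace sm Y" "distant X Y" and g: "klinear sm g" "inj_on g X" "g ` X = Y"
    using GrE[OF X] by blast
  let ?h = "f \<circ> g \<circ> inv f"
  have h: "?h (f x) = f (g x)" for x using Aut_inj[OF f] by simp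
  have "klinear sm ?h"
    using klinear_comp[OF klinear_comp[OF Aut_klinear[OF f] g(1)] Aut_klinear[OF Aut_inv[OF f]]] .
  moreover have "inj_on ?h (f ` X)"
  proof (rule inj_onI)
    fix u w assume "u \<in> f ` X" "w \<in> f ` X" "?h u = ?h w"
    then obtain x y where xy: "x \<in> X" "y \<in> X" "u = f x" "w = f y" "f (g x) = f (g y)"
      using h by auto
    hence "g x = g y" using injD[OF Aut_inj[OF f]] by blast
    thus "u = w" using xy inj_onD[OF g(2)] by blast
  qed
  moreover have "?h ` f ` X = f ` Y"
    unfolding image_image h g(3)[symmetric] by (rule refl)
  ultimately show ?thesis
    using Gr_intro[OF subspace_image[OF Aut_klinear[OF f] Gr_subspace[OF X]]
        subspace_image[OF Aut_klinear[OF f] Y(1)] Aut_distant[OF f Y(2)] klinear_imp_linear_on]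
    by blast
qed

lemma R1_image:
  assumes f: "f \<in> Aut sm" and R: "R1 sm R" shows "R1 sm ((\<lambda>X. f ` X) ` R)"
  unfolding R1_def
proof (intro conjI ballI impI)
  fix X' Y' assume "X' \<in> (\<lambda>X. f ` X) ` R" "Y' \<in> (\<lambda>X. f ` X) ` R" "X' \<noteq> Y'"
  then obtain X Y where "X \<in> R" "Y \<in> R" "X \<noteq> Y" "X' = f ` X" "Y' = f ` Y" by blast
  thus "distant X' Y'" using R Aut_distant[OF f] unfolding R1_def by blast
next
  have inj: "f ` X = f ` Y \<longleftrightarrow> X = Y" for X Y using Aut_inj[OF f] by (simp add: inj_image_eq_iff)
  obtain A B C where "A \<in> R" "B \<in> R" "C \<in> R" "A \<noteq> B" "A \<noteq> C" "B \<noteq> C"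
    using R unfolding R1_def by blast
  thus "\<exists>A B C. A \<in> (\<lambda>X. f ` X) ` R \<and> B \<in> (\<lambda>X. f ` X) ` R \<and> C \<in> (\<lambda>X. f ` X) ` R \<and>
      A \<noteq> B \<and> A \<noteq> C \<and> B \<noteq> C"
    by (intro exI[of _ "f ` A"] exI[of _ "f ` B"] exI[of _ "f ` C"]) (simp add: inj)
qed

lemma R2_image:
  assumes f: "f \<in> Aut sm" and R: "R2 sm R" shows "R2 sm ((\<lambda>X. f ` X) ` R)"
  unfolding R2_def
proof (intro allI impI ballI)
  fix L A' B' C' X' assume L: "is_line sm L"
    and ABC: "A' \<in> (\<lambda>X. f ` X) ` R" "B' \<in> (\<lambda>X. f ` X) ` R" "C' \<in> (\<lambda>X. f ` X) ` R"
    and m: "A' \<noteq> B' \<and> A' \<noteq> C' \<and> B' \<noteq> C' \<and> meets sm L A' \<and> meets sm L B' \<and> meets sm L C'"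
    and X': "X' \<in> (\<lambda>X. f ` X) ` R"
  obtain A B C X where ABCX: "A \<in> R" "B \<in> R" "C \<in> R" "X \<in> R"
    and eq: "A' = f ` A" "B' = f ` B" "C' = f ` C" "X' = f ` X" using ABC X' by blast
  have g: "inv f \<in> Aut sm" by (rule Aut_inv[OF f])
  let ?L = "inv f ` L"
  have "meets sm ?L A" "meets sm ?L B" "meets sm ?L C"
    using m Aut_meets[OF g] eq Aut_image_inv_image[OF f] by metis+
  moreover have "A \<noteq> B" "A \<noteq> C" "B \<noteq> C" using m eq by blast+
  ultimately have "meets sm ?L X" using R Aut_line[OF g L] ABCX unfolding R2_def by blast
  thus "meets sm L X'" using Aut_meets[OF f] eq(4) Aut_image_image_inv[OF f] by metis
qed

lemma Z_regulus_image:
  assumes f: "f \<in> Aut sm" and Z: "Z_regulus sm R" shows "Z_regulus sm ((\<lambda>X. f ` X) ` R)"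
proof -
  have g: "inv f \<in> Aut sm" by (rule Aut_inv[OF f])
  have Gr_image: "(\<lambda>X. h ` X) ` S \<subseteq> Gr sm" if "h \<in> Aut sm" "S \<subseteq> Gr sm" for h S
    using Aut_Gr[OF that(1)] that(2) by blast
  have R: "R \<subseteq> Gr sm" "R1 sm R" "R2 sm R"
    and max: "\<not> (\<exists>S. R \<subset> S \<and> S \<subseteq> Gr sm \<and> R1 sm S \<and> R2 sm S)"
    using Z unfolding Z_regulus_def by blast+
  have "\<not> (\<exists>S. (\<lambda>X. f ` X) ` R \<subset> S \<and> S \<subseteq> Gr sm \<and> R1 sm S \<and> R2 sm S)"
  proof
    assume "\<exists>S. (\<lambda>X. f ` X) ` R \<subset> S \<and> S \<subseteq> Gr sm \<and> R1 sm S \<and> R2 sm S"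
    then obtain S where S: "(\<lambda>X. f ` X) ` R \<subset> S" "S \<subseteq> Gr sm" "R1 sm S" "R2 sm S" by blast
    have undo: "(\<lambda>X. inv f ` X) ` (\<lambda>X. f ` X) ` T = T"
      and redo: "(\<lambda>X. f ` X) ` (\<lambda>X. inv f ` X) ` T = T" for T
      using Aut_image_inv_image[OF f] Aut_image_image_inv[OF f] by (simp_all add: image_image)
    have "R \<subset> (\<lambda>X. inv f ` X) ` S"
    proof
      show "R \<subseteq> (\<lambda>X. inv f ` X) ` S" using image_mono[OF psubset_imp_subset[OF S(1)]] undo by metis
      show "R \<noteq> (\<lambda>X. inv f ` X) ` S" using S(1) redo by blast
    qed
    thus False using max Gr_image[OF g S(2)] R1_image[OF g S(3)] R2_image[OF g S(4)] by blast
  qed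
  thus ?thesis unfolding Z_regulus_def using Gr_image[OF f R(1)] R1_image[OF f R(2)] R2_image[OF f R(3)]
    by (intro conjI)
qed

lemma independent_three:
  assumes P: "\<forall>a b c. a *s u + b *s v + c *s w = 0 \<longrightarrow> a = 0 \<and> b = 0 \<and> c = 0"
  shows "independent {u, v, w} \<and> card {u, v, w} = 3"
proof -
  have "u \<notin> span {v, w}"
  proof
    assume "u \<in> span {v, w}"
    then obtain b c where "u = b *s v + c *s w" using span_pair by blast
    thus False using P[rule_format, of 1 "- b" "- c"] by (simp add: scale_minus_left)
  qed
  moreover have "v \<notin> span {u, w}"
  proof
    assume "v \<in> span {u, w}"
    then obtain b c where "v = b *s u + c *s w" using span_pair by blast
    thus False using P[rule_format, of "- b" 1 "- c"] by (simp add: scale_minus_left algebra_simps)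
  qed
  moreover have "w \<notin> span {u, v}"
  proof
    assume "w \<in> span {u, v}"
    then obtain b c where "w = b *s u + c *s v" using span_pair by blast
    thus False using P[rule_format, of "- b" "- c" 1] by (simp add: scale_minus_left algebra_simps)
  qed
  moreover have "u \<noteq> v" "u \<noteq> w" "v \<noteq> w"
    using calculation span_base[of _ "{_, _}"] by blast+
  moreover have "{u, v, w} - {u} = {v, w}" "{u, v, w} - {v} = {u, w}" "{u, v, w} - {w} = {u, v}"
    using calculation(4-6) by auto
  ultimately show ?thesis unfolding independent_def by simp
qed

lemma span_pair_ne_UNIV:
  assumes "dim_gt_2 sm" shows "span {p, q} \<noteq> UNIV"
proof
  assume U: "span {p, q} = UNIV"
  obtain u v w where "\<forall>a b c. a *s u + b *s v + c *s w = 0 \<longrightarrow> a = 0 \<and> b = 0 \<and> c = 0"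
    using assms unfolding dim_gt_2_def by blast
  hence I: "independent {u, v, w}" "card {u, v, w} = 3" using independent_three by blast+
  hence "card {u, v, w} \<le> card {p, q}" using independent_card_le[of "{p, q}" "{u, v, w}"] U by simp
  moreover have "card {p, q} \<le> 2" by (simp add: card_insert_le_m1)
  ultimately show False using I by simp
qed

lemma line_eq_span: "is_line sm L \<Longrightarrow> \<exists>u v. L = span {u, v}"
  unfolding is_line_def by (auto simp: span_pair)

lemma subspace_line: "is_line sm L \<Longrightarrow> subspace sm L"
  using line_eq_span subspace_span by metis

lemma is_lineI:
  assumes "\<And>a b. a *s u + b *s v = 0 \<Longrightarrow> a = 0 \<and> b = 0" shows "is_line sm (span {u, v})"
  unfolding is_line_def span_pair using assms by blast

lemma line_eq_span_pair:
  assumes L: "is_line sm L" and p: "p \<in> L" "p \<noteq> 0" and q: "q \<in> L" "q \<notin> span {p}"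
  shows "L = span {p, q}"
proof -
  obtain u v where Luv: "L = span {u, v}" using line_eq_span[OF L] by blast
  have "\<exists>r. L = span {r, p}"
  proof (cases "p \<in> span {v}")
    case False
    have "span {p, v} = span {u, v}" using span_exchange[of p u "{v}"] p Luv False by simp
    thus ?thesis using Luv by (metis insert_commute)
  next
    case True
    then obtain b where b: "p = b *s v" using span_singleton by blast
    hence "v = inverse b *s p" using p(2) scale_inverse_scale by auto
    hence "v \<in> span {u, p}" by (simp add: span_scale span_base)
    hence "span {u, p} = span {v, u, p}" using span_redundant by simp
    also have "\<dots> = span {p, u, v}" by (simp add: insert_commute)
    also have "\<dots> = span {u, v}"
      using span_redundant True span_mono[of "{v}" "{u, v}"] by blast
    finally show ?thesis using Luv by blast
  qed
  then obtain r where r: "L = span {r, p}" by blast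
  have "span {q, p} = span {r, p}" using span_exchange[of q r "{p}"] q r by simp
  thus ?thesis using r by (simp add: insert_commute)
qed

lemma meetsI: "subspace sm L \<Longrightarrow> subspace sm M \<Longrightarrow> p \<noteq> 0 \<Longrightarrow> p \<in> L \<Longrightarrow> p \<in> M \<Longrightarrow> meets sm L M"
  unfolding meets_def is_point_def by (intro exI[of _ "range (\<lambda>c. c *s p)"]) (auto simp: subspace_scale)

lemma meetsE:
  assumes "meets sm L M" obtains p where "p \<noteq> 0" "p \<in> L" "p \<in> M"
proof -
  obtain P v where "v \<noteq> 0" "P = range (\<lambda>c. c *s v)" "P \<subseteq> L" "P \<subseteq> M"
    using assms unfolding meets_def is_point_def by blast
  moreover have "v = 1 *s v" by simp
  ultimately show ?thesis using that by (metis rangeI subsetD)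
qed

end

subsection \<open>The standard regulus of a frame\<close>

locale regulus_frame =
  left_vector_space sm for sm :: "'k::division_ring \<Rightarrow> 'v::ab_group_add \<Rightarrow> 'v" (infixr "*s" 75) +
  fixes A B :: "'v set" and phi :: "'v \<Rightarrow> 'v"
  assumes subspace_A: "subspace sm A" and subspace_B: "subspace sm B" and distant_AB: "distant A B"
    and klinear_phi: "klinear sm phi" and inj_phi: "inj_on phi A" and phi_A: "phi ` A = B"
begin

definition central :: "'k \<Rightarrow> bool" where
  "central l \<longleftrightarrow> (\<forall>m. m * l = l * m)"

definition graph :: "'k \<Rightarrow> 'v set" where
  "graph l = {a + l *s phi a | a. a \<in> A}"

definition standard_regulus :: "'v set set" where
  "standard_regulus = insert B {graph l | l. central l}"

lemma central_0: "central 0" and central_1: "central 1"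
  unfolding central_def by simp_all

lemma phi_in_B: "a \<in> A \<Longrightarrow> k *s phi a \<in> B"
  using phi_A subspace_scale[OF subspace_B] by blast

lemma phi_add: "phi (a + b) = phi a + phi b"
  and phi_scale: "phi (k *s a) = k *s phi a"
  and phi_diff: "phi (a - b) = phi a - phi b"
  and phi_0: "phi 0 = 0"
  using klinear_add klinear_scale klinear_diff klinear_0 klinear_phi by blast+

lemma phi_eq_0_iff: "a \<in> A \<Longrightarrow> phi a = 0 \<longleftrightarrow> a = 0"
  using inj_onD[OF inj_phi, of a 0] subspace_0[OF subspace_A] phi_0 by auto

lemma AB_decomp_unique:
  "x1 \<in> A \<Longrightarrow> x2 \<in> A \<Longrightarrow> y1 \<in> B \<Longrightarrow> y2 \<in> B \<Longrightarrow> x1 + y1 = x2 + y2 \<Longrightarrow> x1 = x2 \<and> y1 = y2"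
  by (rule distant_decomp_unique[OF distant_AB subspace_A subspace_B])

lemma graph_member: "a \<in> A \<Longrightarrow> a + l *s phi a \<in> graph l"
  unfolding graph_def by blast

lemma graphE: "x \<in> graph l \<Longrightarrow> (\<And>a. a \<in> A \<Longrightarrow> x = a + l *s phi a \<Longrightarrow> P) \<Longrightarrow> P"
  unfolding graph_def by blast

lemma graph_0: "graph 0 = A"
  unfolding graph_def by auto

lemma graph_member_nonzero: "a \<in> A \<Longrightarrow> a \<noteq> 0 \<Longrightarrow> a + l *s phi a \<noteq> 0"
  using AB_decomp_unique[of a 0 "l *s phi a" 0] subspace_0[OF subspace_A] subspace_0[OF subspace_B]
    phi_in_B by auto

lemma proj_graph_member: "a \<in> A \<Longrightarrow> proj A B (a + l *s phi a) = a"
  by (rule proj_eq[OF distant_AB subspace_A subspace_B]) (simp_all add: phi_in_B)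

lemma subspace_graph:
  assumes l: "central l" shows "subspace sm (graph l)"
proof (rule subspaceI)
  show "0 \<in> graph l" using graph_member[OF subspace_0[OF subspace_A], of l] phi_0 by simp
next
  fix x y assume "x \<in> graph l" "y \<in> graph l"
  then obtain a b where ab: "a \<in> A" "b \<in> A" "x = a + l *s phi a" "y = b + l *s phi b"
    by (metis graphE)
  have "x + y = (a + b) + l *s phi (a + b)"
    using ab by (simp add: phi_add scale_right_distrib algebra_simps)
  thus "x + y \<in> graph l" using graph_member subspace_add[OF subspace_A ab(1,2)] by simp
next
  fix c x assume "x \<in> graph l"
  then obtain a where a: "a \<in> A" "x = a + l *s phi a" by (metis graphE)
  txt \<open>Here the centrality of \<open>l\<close> is needed.\<close>
  have "c *s x = c *s a + l *s phi (c *s a)"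
    using a l unfolding central_def by (simp add: scale_right_distrib phi_scale scale_scale[symmetric])
  thus "c *s x \<in> graph l" using graph_member subspace_scale[OF subspace_A a(1)] by simp
qed

lemma distant_B_graph:
  assumes l: "central l" shows "distant B (graph l)"
proof (rule distantI[OF _ subspace_B subspace_graph[OF l]])
  fix v assume v: "v \<in> B" "v \<in> graph l"
  then obtain a where a: "a \<in> A" "v = a + l *s phi a" by (metis graphE)
  have "a = v - l *s phi a" using a by simp
  hence "a \<in> B" using v(1) subspace_diff[OF subspace_B] phi_in_B[OF a(1)] by metis
  hence "a = 0" using distant_inter[OF distant_AB a(1)] by blast
  thus "v = 0" using a phi_0 by simp
next
  fix v
  let ?a = "proj A B v"
  have a: "?a \<in> A" "v - ?a \<in> B" using proj[OF distant_AB subspace_A subspace_B] by blast+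
  have "v = ((v - ?a) - l *s phi ?a) + (?a + l *s phi ?a)" by simp
  moreover have "(v - ?a) - l *s phi ?a \<in> B" using a subspace_diff[OF subspace_B] phi_in_B by blast
  moreover have "?a + l *s phi ?a \<in> graph l" using graph_member a by blast
  ultimately show "\<exists>x y. x \<in> B \<and> y \<in> graph l \<and> v = x + y" by blast
qed

lemma distant_graph_graph:
  assumes l: "central l" and m: "central m" and lm: "l \<noteq> m"
  shows "distant (graph l) (graph m)"
proof (rule distantI[OF _ subspace_graph[OF l] subspace_graph[OF m]])
  fix v assume v: "v \<in> graph l" "v \<in> graph m"
  obtain a where a: "a \<in> A" "v = a + l *s phi a" using v(1) by (metis graphE)
  obtain b where b: "b \<in> A" "v = b + m *s phi b" using v(2) by (metis graphE)
  have "a + l *s phi a = b + m *s phi b" using a(2) b(2) by simp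
  hence "a = b \<and> l *s phi a = m *s phi b"
    by (rule AB_decomp_unique[OF a(1) b(1) phi_in_B[OF a(1)] phi_in_B[OF b(1)]])
  hence "l *s phi a = m *s phi a" by metis
  hence "(l - m) *s phi a = 0" by (simp add: scale_left_diff_distrib)
  hence "a = 0" using lm phi_eq_0_iff[OF a(1)] by simp
  thus "v = 0" using a phi_0 by simp
next
  fix v
  let ?x = "proj A B v"
  have x: "?x \<in> A" "v - ?x \<in> B" using proj[OF distant_AB subspace_A subspace_B] by blast+
  obtain z where z: "z \<in> A" "v - ?x = phi z" using x(2) phi_A by blast
  txt \<open>Solve \<open>a + a' = ?x\<close> and \<open>l a + m a' = z\<close> in \<open>A\<close>.\<close>
  define a where "a = inverse (l - m) *s (z - m *s ?x)"
  define a' where "a' = ?x - a"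
  have aA: "a \<in> A" "a' \<in> A"
    unfolding a'_def a_def using z x subspace_scale[OF subspace_A] subspace_diff[OF subspace_A]
    by blast+
  have "(l - m) *s a = z - m *s ?x" unfolding a_def using scale_scale_inverse lm by simp
  hence "l *s a + m *s a' = z"
    unfolding a'_def by (simp add: scale_left_diff_distrib scale_right_diff_distrib algebra_simps)
  hence "l *s phi a + m *s phi a' = phi z" by (metis phi_add phi_scale)
  hence "v = (a + l *s phi a) + (a' + m *s phi a')" using z unfolding a'_def
    by (metis (no_types, lifting) add.commute add.left_commute diff_add_cancel)
  moreover have "a + l *s phi a \<in> graph l" "a' + m *s phi a' \<in> graph m" using graph_member aA by blast+
  ultimately show "\<exists>x y. x \<in> graph l \<and> y \<in> graph m \<and> v = x + y" by blast
qed

lemma graph_Gr: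
  assumes l: "central l" shows "graph l \<in> Gr sm"
proof (rule Gr_intro[OF subspace_graph[OF l] subspace_B distant_commute[OF distant_B_graph[OF l]]])
  let ?g = "phi \<circ> proj A B"
  show "linear_on (graph l) ?g"
    by (rule klinear_imp_linear_on[OF klinear_comp[OF klinear_phi klinear_proj]])
      (fact distant_AB subspace_A subspace_B)+
  show "inj_on ?g (graph l)"
  proof (rule inj_onI)
    fix x y assume xy: "x \<in> graph l" "y \<in> graph l" "?g x = ?g y"
    obtain a where a: "a \<in> A" "x = a + l *s phi a" using xy(1) by (metis graphE)
    obtain b where b: "b \<in> A" "y = b + l *s phi b" using xy(2) by (metis graphE)
    have "phi a = phi b" using xy(3) a b proj_graph_member by simp
    thus "x = y" using inj_onD[OF inj_phi _ a(1) b(1)] a b by simp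
  qed
  have "?g (a + l *s phi a) = phi a" if "a \<in> A" for a using proj_graph_member[OF that] by simp
  thus "?g ` graph l = B" unfolding graph_def phi_A[symmetric] by force
qed

lemma B_Gr: "B \<in> Gr sm"
proof (rule Gr_intro[OF subspace_B subspace_A distant_commute[OF distant_AB]])
  show "linear_on B (inv_into A phi)"
    using linear_on_inv_into[OF klinear_imp_linear_on[OF klinear_phi] subspace_A inj_phi] phi_A by simp
  show "inj_on (inv_into A phi) B" using inj_on_inv_into phi_A by blast
  show "inv_into A phi ` B = A" using inv_into_image_cancel[OF inj_phi order_refl] phi_A by simp
qed

lemma standard_regulus_cases:
  "X \<in> standard_regulus \<Longrightarrow> (X = B \<Longrightarrow> P) \<Longrightarrow> (\<And>l. central l \<Longrightarrow> X = graph l \<Longrightarrow> P) \<Longrightarrow> P"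
  unfolding standard_regulus_def by blast

lemma B_in_standard_regulus: "B \<in> standard_regulus"
  and graph_in_standard_regulus: "central l \<Longrightarrow> graph l \<in> standard_regulus"
  unfolding standard_regulus_def by blast+

lemma A_in_standard_regulus: "A \<in> standard_regulus"
  using graph_in_standard_regulus[OF central_0] graph_0 by simp

lemma standard_regulus_Gr: "standard_regulus \<subseteq> Gr sm"
  using B_Gr graph_Gr standard_regulus_cases by blast

lemma standard_regulus_distant:
  assumes "X \<in> standard_regulus" "Y \<in> standard_regulus" "X \<noteq> Y" shows "distant X Y"
  using assms(1)
proof (rule standard_regulus_cases)
  assume "X = B"
  thus ?thesis using assms(2,3) distant_B_graph by (auto elim: standard_regulus_cases)
next
  fix l assume l: "central l" "X = graph l"
  show ?thesis using assms(2)
  proof (rule standard_regulus_cases)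
    assume "Y = B" thus ?thesis using l distant_commute[OF distant_B_graph] by simp
  next
    fix m assume "central m" "Y = graph m"
    thus ?thesis using l assms(3) distant_graph_graph by blast
  qed
qed

subsection \<open>Transversals\<close>

definition transversal :: "'v set \<Rightarrow> bool" where
  "transversal L \<longleftrightarrow> (\<exists>a\<in>A. a \<noteq> 0 \<and> a \<in> L \<and> phi a \<in> L)"

lemma is_line_span_phi:
  assumes a: "a \<in> A" "a \<noteq> 0" shows "is_line sm (span {a, phi a})"
proof (rule is_lineI)
  fix r s assume "r *s a + s *s phi a = 0"
  hence "r *s a + s *s phi a = 0 + 0" by simp
  hence "r *s a = 0 \<and> s *s phi a = 0"
    using AB_decomp_unique subspace_scale[OF subspace_A a(1)] subspace_0[OF subspace_A]
      subspace_0[OF subspace_B] phi_in_B[OF a(1)] by blast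
  thus "r = 0 \<and> s = 0" using a phi_eq_0_iff by simp
qed

lemma transversal_meets:
  assumes L: "is_line sm L" "transversal L" and M: "M \<in> standard_regulus"
  shows "meets sm L M"
proof -
  obtain a where a: "a \<in> A" "a \<noteq> 0" "a \<in> L" "phi a \<in> L" using L(2) unfolding transversal_def by blast
  have sL: "subspace sm L" using subspace_line[OF L(1)] .
  show ?thesis using M
  proof (rule standard_regulus_cases)
    assume "M = B"
    have "phi a \<noteq> 0" "phi a \<in> B" using a phi_eq_0_iff phi_in_B[of a 1] by auto
    thus ?thesis using \<open>M = B\<close> meetsI[OF sL subspace_B _ a(4)] by simp
  next
    fix l assume l: "central l" "M = graph l"
    have "a + l *s phi a \<in> L" using a sL subspace_add subspace_scale by blast
    thus ?thesis using meetsI[OF sL subspace_graph[OF l(1)] graph_member_nonzero[OF a(1,2)]]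
        graph_member[OF a(1)] l(2) by simp
  qed
qed

lemma meets_graphE:
  assumes "meets sm L (graph l)" obtains a where "a \<in> A" "a \<noteq> 0" "a + l *s phi a \<in> L"
proof -
  obtain p where p: "p \<noteq> 0" "p \<in> L" "p \<in> graph l" using meetsE[OF assms] by blast
  then obtain a where a: "a \<in> A" "p = a + l *s phi a" by (metis graphE)
  have "a \<noteq> 0" using p a phi_0 by auto
  thus ?thesis using that a p by blast
qed

lemma meets_BE:
  assumes "meets sm L B" obtains c where "c \<in> A" "c \<noteq> 0" "phi c \<in> L"
proof -
  obtain p where p: "p \<noteq> 0" "p \<in> L" "p \<in> B" using meetsE[OF assms] by blast
  then obtain c where c: "c \<in> A" "p = phi c" using phi_A by blast
  have "c \<noteq> 0" using p c phi_0 by auto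
  thus ?thesis using that c p by blast
qed

lemma transversal_if_meets_B_graph_graph:
  assumes L: "is_line sm L" and l: "central l" and lm: "l \<noteq> m"
    and meets: "meets sm L B" "meets sm L (graph l)" "meets sm L (graph m)"
  shows "transversal L"
proof -
  have sL: "subspace sm L" using subspace_line[OF L] .
  obtain c where c: "c \<in> A" "c \<noteq> 0" "phi c \<in> L" using meets_BE[OF meets(1)] by blast
  obtain a where a: "a \<in> A" "a \<noteq> 0" "a + l *s phi a \<in> L" using meets_graphE[OF meets(2)] by blast
  obtain a' where a': "a' \<in> A" "a' \<noteq> 0" "a' + m *s phi a' \<in> L" using meets_graphE[OF meets(3)] by blast
  have "a + l *s phi a \<notin> span {phi c}"
  proof
    assume "a + l *s phi a \<in> span {phi c}"
    then obtain t where "a + l *s phi a = 0 + t *s phi c" using span_singleton by auto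
    hence "a = 0" using AB_decomp_unique[OF a(1) subspace_0[OF subspace_A]] phi_in_B a(1) c(1) by blast
    thus False using a by simp
  qed
  hence "L = span {phi c, a + l *s phi a}"
    using line_eq_span_pair[OF L c(3) _ a(3)] phi_eq_0_iff c by blast
  then obtain r s where "a' + m *s phi a' = r *s phi c + s *s (a + l *s phi a)"
    using a'(3) span_pair by auto
  hence "a' + m *s phi a' = s *s a + (r *s phi c + (s * l) *s phi a)"
    by (simp add: scale_right_distrib scale_scale algebra_simps)
  moreover have "s *s a \<in> A" "r *s phi c + (s * l) *s phi a \<in> B"
    using a(1) c(1) subspace_scale[OF subspace_A] phi_in_B subspace_add[OF subspace_B] by blast+
  ultimately have "a' = s *s a" "m *s phi a' = r *s phi c + (s * l) *s phi a"
    using AB_decomp_unique a'(1) phi_in_B by blast+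
  txt \<open>Comparing the \<open>B\<close>-components gives \<open>(m - l) s \<phi>(a) \<in> span {\<phi>(c)}\<close>, with \<open>s \<noteq> 0\<close>.\<close>
  hence s: "s \<noteq> 0" and "((m - l) * s) *s phi a = r *s phi c" using a'(2) l
    by (auto simp: phi_scale scale_scale[symmetric] left_diff_distrib scale_left_diff_distrib
        central_def algebra_simps)
  moreover have "(m - l) * s \<noteq> 0" using s lm by simp
  ultimately have "phi a = inverse ((m - l) * s) *s (r *s phi c)" by (metis scale_inverse_scale)
  hence "phi a \<in> L" using c(3) sL subspace_scale by metis
  moreover have "a = (a + l *s phi a) - l *s phi a" by simp
  hence "a \<in> L" using a(3) \<open>phi a \<in> L\<close> sL subspace_diff subspace_scale by metis
  ultimately show ?thesis unfolding transversal_def using a by blast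
qed

lemma graph_points_dependent:
  assumes L: "is_line sm L" and central: "central l" "central m" and ne: "l \<noteq> n" "m \<noteq> n"
    and a: "a \<in> A" "a \<noteq> 0" "a + l *s phi a \<in> L"
    and a': "a' \<in> A" "a' + m *s phi a' \<in> L"
    and a'': "a'' \<in> A" "a'' \<noteq> 0" "a'' + n *s phi a'' \<in> L"
  shows "a' \<in> span {a}"
proof (rule ccontr)
  assume na: "a' \<notin> span {a}"
  have "a' + m *s phi a' \<notin> span {a + l *s phi a}"
  proof
    assume "a' + m *s phi a' \<in> span {a + l *s phi a}"
    then obtain t where "a' + m *s phi a' = t *s (a + l *s phi a)" using span_singleton by blast
    hence "a' + m *s phi a' = t *s a + (t * l) *s phi a" by (simp add: scale_right_distrib scale_scale)
    hence "a' = t *s a"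
      using AB_decomp_unique[OF a'(1) subspace_scale[OF subspace_A a(1)] phi_in_B[OF a'(1)]
          phi_in_B[OF a(1)]] by blast
    thus False using na span_singleton by blast
  qed
  hence "L = span {a + l *s phi a, a' + m *s phi a'}"
    using line_eq_span_pair[OF L a(3) graph_member_nonzero[OF a(1,2)] a'(2)] by blast
  then obtain r s where "a'' + n *s phi a'' = r *s (a + l *s phi a) + s *s (a' + m *s phi a')"
    using a''(3) span_pair by blast
  hence "a'' + n *s phi a'' = (r *s a + s *s a') + ((r * l) *s phi a + (s * m) *s phi a')"
    by (simp add: scale_right_distrib scale_scale algebra_simps)
  moreover have "r *s a + s *s a' \<in> A"
    using subspace_add[OF subspace_A subspace_scale[OF subspace_A a(1)] subspace_scale[OF subspace_A a'(1)]] .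
  moreover have "(r * l) *s phi a + (s * m) *s phi a' \<in> B"
    using subspace_add[OF subspace_B phi_in_B[OF a(1)] phi_in_B[OF a'(1)]] .
  ultimately have e: "a'' = r *s a + s *s a'" "n *s phi a'' = (r * l) *s phi a + (s * m) *s phi a'"
    using AB_decomp_unique[OF a''(1) _ phi_in_B[OF a''(1)]] by blast+
  txt \<open>Apply \<open>\<phi>\<^sup>-\<^sup>1\<close> to the \<open>B\<close>-component and compare with the \<open>A\<close>-component.\<close>
  have "phi (n *s a'') = phi ((r * l) *s a + (s * m) *s a')" using e(2) by (simp add: phi_scale phi_add)
  moreover have "n *s a'' \<in> A" "(r * l) *s a + (s * m) *s a' \<in> A"
    using subspace_scale[OF subspace_A a''(1)]
      subspace_add[OF subspace_A subspace_scale[OF subspace_A a(1)] subspace_scale[OF subspace_A a'(1)]]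
    by blast+
  ultimately have "n *s a'' = (r * l) *s a + (s * m) *s a'" using inj_onD[OF inj_phi] by blast
  hence "((n - l) * r) *s a = ((m - n) * s) *s a'"
    using e(1) central unfolding central_def
    by (simp add: scale_right_distrib scale_scale left_diff_distrib scale_left_diff_distrib algebra_simps)
  show False
  proof (cases "s = 0")
    case True
    hence "r = 0" using \<open>((n - l) * r) *s a = _\<close> a(2) ne by simp
    thus False using e(1) True a''(2) by simp
  next
    case False
    hence "(m - n) * s \<noteq> 0" using ne by simp
    hence "a' = (inverse ((m - n) * s) * ((n - l) * r)) *s a"
      using \<open>((n - l) * r) *s a = _\<close> by (metis scale_inverse_scale scale_scale)
    thus False using na span_singleton by blast
  qed
qed

lemma transversal_if_meets_three_graphs:
  assumes L: "is_line sm L" and central: "central l" "central m" "central n"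
    and ne: "l \<noteq> m" "l \<noteq> n" "m \<noteq> n"
    and meets: "meets sm L (graph l)" "meets sm L (graph m)" "meets sm L (graph n)"
  shows "transversal L"
proof -
  have sL: "subspace sm L" using subspace_line[OF L] .
  obtain a where a: "a \<in> A" "a \<noteq> 0" "a + l *s phi a \<in> L" using meets_graphE[OF meets(1)] by blast
  obtain a' where a': "a' \<in> A" "a' \<noteq> 0" "a' + m *s phi a' \<in> L" using meets_graphE[OF meets(2)] by blast
  obtain a'' where a'': "a'' \<in> A" "a'' \<noteq> 0" "a'' + n *s phi a'' \<in> L"
    using meets_graphE[OF meets(3)] by blast
  obtain k where k: "a' = k *s a"
    using graph_points_dependent[OF L central(1,2) ne(2,3) a a'(1,3) a''] span_singleton by blast
  hence "k \<noteq> 0" using a'(2) by auto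
  moreover have "a' + m *s phi a' = k *s (a + m *s phi a)"
    using k central(2) unfolding central_def by (simp add: phi_scale scale_right_distrib scale_scale[symmetric])
  ultimately have "a + m *s phi a = inverse k *s (a' + m *s phi a')" by (simp add: scale_inverse_scale)
  hence "a + m *s phi a \<in> L" using a'(3) sL subspace_scale by metis
  moreover have "(l - m) *s phi a = (a + l *s phi a) - (a + m *s phi a)"
    by (simp add: scale_left_diff_distrib)
  ultimately have "(l - m) *s phi a \<in> L" using a(3) sL subspace_diff by metis
  hence "inverse (l - m) *s ((l - m) *s phi a) \<in> L" using sL subspace_scale by blast
  hence "phi a \<in> L" using ne(1) by (simp add: scale_inverse_scale)
  moreover have "a = (a + l *s phi a) - l *s phi a" by simp
  hence "a \<in> L" using a(3) \<open>phi a \<in> L\<close> sL subspace_diff subspace_scale by metis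
  ultimately show ?thesis unfolding transversal_def using a by blast
qed

lemma transversal_if_meets_three:
  assumes L: "is_line sm L" and M: "M1 \<in> standard_regulus" "M2 \<in> standard_regulus" "M3 \<in> standard_regulus"
    and ne: "M1 \<noteq> M2" "M1 \<noteq> M3" "M2 \<noteq> M3" "M2 \<noteq> B" "M3 \<noteq> B"
    and meets: "meets sm L M1" "meets sm L M2" "meets sm L M3"
  shows "transversal L"
proof -
  obtain m n where mn: "central m" "M2 = graph m" "central n" "M3 = graph n"
    using M(2,3) ne(4,5) by (metis standard_regulus_cases)
  hence "m \<noteq> n" using ne(3) by blast
  show ?thesis using M(1)
  proof (rule standard_regulus_cases)
    assume "M1 = B"
    thus ?thesis using transversal_if_meets_B_graph_graph[OF L mn(1) \<open>m \<noteq> n\<close>] meets mn by simp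
  next
    fix l assume l: "central l" "M1 = graph l"
    hence "l \<noteq> m" "l \<noteq> n" using ne(1,2) mn by blast+
    thus ?thesis
      using transversal_if_meets_three_graphs[OF L l(1) mn(1,3) _ _ \<open>m \<noteq> n\<close>] meets mn l by simp
  qed
qed

lemma R2_standard_regulus: "R2 sm standard_regulus"
  unfolding R2_def
proof (intro allI impI ballI)
  fix L M1 M2 M3 X
  assume L: "is_line sm L" and M: "M1 \<in> standard_regulus" "M2 \<in> standard_regulus" "M3 \<in> standard_regulus"
    and h: "M1 \<noteq> M2 \<and> M1 \<noteq> M3 \<and> M2 \<noteq> M3 \<and> meets sm L M1 \<and> meets sm L M2 \<and> meets sm L M3"
    and X: "X \<in> standard_regulus"
  have "transversal L"
  proof (cases "M2 = B \<or> M3 = B")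
    case True
    thus ?thesis using h transversal_if_meets_three[OF L M(2,1,3)] transversal_if_meets_three[OF L M(3,1,2)]
      by metis
  next
    case False
    thus ?thesis using h transversal_if_meets_three[OF L M] by blast
  qed
  thus "meets sm L X" using transversal_meets[OF L _ X] by blast
qed

subsection \<open>Maximality of the standard regulus\<close>

lemma exists_not_in_span_singleton:
  assumes dim: "dim_gt_2 sm" shows "\<exists>a'\<in>A. a' \<notin> span {a}"
proof (rule ccontr)
  assume "\<not> (\<exists>a'\<in>A. a' \<notin> span {a})"
  hence A: "A \<subseteq> span {a}" by blast
  hence "B \<subseteq> span {phi a}" using phi_A klinear_image_span[OF klinear_phi, of "{a}"] by auto
  have "UNIV \<subseteq> span {a, phi a}"
  proof
    fix z
    obtain x y where "x \<in> A" "y \<in> B" "z = x + y" using distantD[OF distant_AB] by blast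
    moreover have "span {a} \<subseteq> span {a, phi a}" "span {phi a} \<subseteq> span {a, phi a}"
      by (simp_all add: span_mono)
    ultimately show "z \<in> span {a, phi a}" using A \<open>B \<subseteq> span {phi a}\<close> span_add by blast
  qed
  thus False using span_pair_ne_UNIV[OF dim] by blast
qed

lemma frame_distinct:
  assumes dim: "dim_gt_2 sm" shows "A \<noteq> B" "A \<noteq> graph 1" "B \<noteq> graph 1"
proof -
  obtain a where a: "a \<in> A" "a \<noteq> 0"
    using exists_not_in_span_singleton[OF dim, of 0] span_0 by (auto simp: span_singleton)
  have "phi a \<in> B" "phi a \<noteq> 0" using phi_in_B[OF a(1), of 1] phi_eq_0_iff a by auto
  hence "B \<noteq> {0}" by blast
  moreover have "A \<noteq> {0}" using a by blast
  moreover have "graph 1 \<noteq> {0}" using graph_member[OF a(1), of 1] graph_member_nonzero[OF a] by blast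
  moreover have "distant A (graph 1)" using distant_graph_graph[OF central_0 central_1] graph_0 by simp
  ultimately show "A \<noteq> B" "A \<noteq> graph 1" "B \<noteq> graph 1"
    using distant_self distant_AB distant_B_graph[OF central_1] by metis+
qed

lemma R1_standard_regulus: "dim_gt_2 sm \<Longrightarrow> R1 sm standard_regulus"
  unfolding R1_def using standard_regulus_distant frame_distinct A_in_standard_regulus
    B_in_standard_regulus graph_in_standard_regulus[OF central_1] by blast

text \<open>A subspace complementary to \<open>B\<close> that meets every transversal \<open>span {a, \<phi>(a)}\<close> is
  the graph of some \<open>l \<phi>\<close>; comparing the slopes along \<open>a\<close>, \<open>a'\<close> and \<open>a + a'\<close> for
  independent \<open>a, a'\<close> shows that the slope is constant and central.\<close>
context
  fixes X :: "'v set"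
  assumes X: "subspace sm X" and XB: "distant X B"
    and slope: "\<And>a. a \<in> A \<Longrightarrow> a \<noteq> 0 \<Longrightarrow> \<exists>k. a + k *s phi a \<in> X"
begin

lemma complement_coeff_unique:
  assumes "x \<in> A" "c1 \<in> A" "c2 \<in> A" "x + phi c1 \<in> X" "x + phi c2 \<in> X"
  shows "c1 = c2"
proof -
  have "phi (c1 - c2) \<in> X" using subspace_diff[OF X assms(4,5)] by (simp add: phi_diff)
  moreover have "phi (c1 - c2) \<in> B" using phi_in_B[OF subspace_diff[OF subspace_A assms(2,3)], of 1] by simp
  ultimately have "phi (c1 - c2) = 0" by (rule distant_inter[OF XB])
  thus ?thesis using phi_eq_0_iff subspace_diff[OF subspace_A assms(2,3)] by simp
qed

lemma slope_eq:
  assumes a: "a \<in> A" "a \<noteq> 0" "a + k *s phi a \<in> X"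
    and a': "a' \<in> A" "a' \<notin> span {a}" "a' + k' *s phi a' \<in> X"
  shows "k = k'"
proof -
  have aa: "a + a' \<in> A" using subspace_add[OF subspace_A a(1) a'(1)] .
  have "a + a' \<noteq> 0"
  proof
    assume "a + a' = 0"
    hence "a' = (- 1) *s a" by (simp add: add_eq_0_iff)
    thus False using a'(2) span_singleton by blast
  qed
  then obtain k'' where k'': "(a + a') + k'' *s phi (a + a') \<in> X" using slope[OF aa] by blast
  have "(a + a') + phi (k *s a + k' *s a') \<in> X"
    using subspace_add[OF X a(3) a'(3)] by (simp add: phi_add phi_scale algebra_simps)
  moreover have "k'' *s (a + a') \<in> A" "k *s a + k' *s a' \<in> A"
    using a a' aa subspace_scale[OF subspace_A] subspace_add[OF subspace_A] by blast+
  ultimately have "k'' *s (a + a') = k *s a + k' *s a'"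
    using complement_coeff_unique[OF aa] k'' by (simp add: phi_scale)
  hence H: "(k'' - k) *s a = (k' - k'') *s a'"
    by (simp add: scale_left_diff_distrib scale_right_distrib algebra_simps)
  have "k' = k''"
  proof (rule ccontr)
    assume "k' \<noteq> k''"
    hence "a' = (inverse (k' - k'') * (k'' - k)) *s a"
      using H by (metis scale_inverse_scale scale_scale right_minus_eq)
    thus False using a'(2) span_singleton by blast
  qed
  hence "(k'' - k) *s a = 0" using H by simp
  thus ?thesis using a(2) \<open>k' = k''\<close> by simp
qed

lemma uniform_slope:
  assumes dim: "dim_gt_2 sm" shows "\<exists>k. \<forall>a\<in>A. a + k *s phi a \<in> X"
proof -
  obtain a0 where a0: "a0 \<in> A" "a0 \<noteq> 0"
    using exists_not_in_span_singleton[OF dim, of 0] by (auto simp: span_singleton)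
  obtain k0 where k0: "a0 + k0 *s phi a0 \<in> X" using slope[OF a0] by blast
  have "a + k0 *s phi a \<in> X" if a: "a \<in> A" for a
  proof (cases "a = 0")
    case True thus ?thesis using subspace_0[OF X] phi_0 by simp
  next
    case False
    obtain ka where ka: "a + ka *s phi a \<in> X" using slope[OF a False] by blast
    obtain a1 where a1: "a1 \<in> A" "a1 \<notin> span {a0}" using exists_not_in_span_singleton[OF dim] by blast
    hence "a1 \<noteq> 0" using span_0 by blast
    then obtain k1 where k1: "a1 + k1 *s phi a1 \<in> X" using slope[OF a1(1)] by blast
    have "k0 = k1" using slope_eq[OF a0 k0 a1 k1] .
    show ?thesis
    proof (cases "a \<in> span {a0}")
      case False
      thus ?thesis using slope_eq[OF a0 k0 a _ ka] ka by simp
    next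
      case True
      have "a \<notin> span {a1}"
      proof
        assume "a \<in> span {a1}"
        then obtain \<nu> \<mu> where "a = \<nu> *s a1" "a = \<mu> *s a0" using True span_singleton by blast
        hence "\<nu> \<noteq> 0" "a1 = (inverse \<nu> * \<mu>) *s a0"
          using \<open>a \<noteq> 0\<close> scale_inverse_scale by (auto simp: scale_scale)
        thus False using a1(2) span_singleton by blast
      qed
      thus ?thesis using slope_eq[OF a1(1) \<open>a1 \<noteq> 0\<close> k1 a _ ka] ka \<open>k0 = k1\<close> by simp
    qed
  qed
  thus ?thesis by blast
qed

lemma uniform_slope_central:
  assumes a0: "a0 \<in> A" "a0 \<noteq> 0" and k: "\<forall>a\<in>A. a + k *s phi a \<in> X"
  shows "central k"
  unfolding central_def
proof
  fix \<mu>
  have "\<mu> *s a0 \<in> A" using subspace_scale[OF subspace_A a0(1)] .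
  hence "\<mu> *s a0 + phi (k *s (\<mu> *s a0)) \<in> X" using k[rule_format, of "\<mu> *s a0"] by (simp add: phi_scale)
  moreover have "\<mu> *s a0 + phi (\<mu> *s (k *s a0)) \<in> X"
    using subspace_scale[OF X, of "a0 + k *s phi a0" \<mu>] k a0(1)
    by (simp add: scale_right_distrib phi_scale)
  ultimately have "k *s (\<mu> *s a0) = \<mu> *s (k *s a0)"
    using complement_coeff_unique[OF \<open>\<mu> *s a0 \<in> A\<close>] subspace_scale[OF subspace_A]
      \<open>\<mu> *s a0 \<in> A\<close> a0(1) by blast
  hence "(k * \<mu>) *s a0 = (\<mu> * k) *s a0" by (simp add: scale_scale)
  thus "\<mu> * k = k * \<mu>" using scale_cancel_left[OF a0(2)] by simp
qed

lemma complement_eq_graph: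
  assumes dim: "dim_gt_2 sm" shows "\<exists>l. central l \<and> X = graph l"
proof -
  obtain k where k: "\<forall>a\<in>A. a + k *s phi a \<in> X" using uniform_slope[OF dim] by blast
  obtain a0 where a0: "a0 \<in> A" "a0 \<noteq> 0"
    using exists_not_in_span_singleton[OF dim, of 0] by (auto simp: span_singleton)
  have "graph k \<subseteq> X" using k unfolding graph_def by blast
  moreover have "X \<subseteq> graph k"
  proof
    fix x assume x: "x \<in> X"
    let ?a = "proj A B x"
    have a: "?a \<in> A" "x - ?a \<in> B" using proj[OF distant_AB subspace_A subspace_B] by blast+
    obtain c where c: "c \<in> A" "x - ?a = phi c" using a(2) phi_A by blast
    have "?a + phi c \<in> X" using x c by (metis add.commute diff_add_cancel)
    moreover have "?a + phi (k *s ?a) \<in> X" using k a(1) by (simp add: phi_scale)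
    ultimately have "c = k *s ?a"
      using complement_coeff_unique[OF a(1) c(1) subspace_scale[OF subspace_A a(1)]] by blast
    hence "x = ?a + k *s phi ?a" using c by (metis diff_add_cancel add.commute phi_scale)
    thus "x \<in> graph k" using graph_member[OF a(1)] by metis
  qed
  ultimately show ?thesis using uniform_slope_central[OF a0 k] by blast
qed

end

lemma standard_regulus_maximal:
  assumes dim: "dim_gt_2 sm" and S: "S \<subseteq> Gr sm" "R1 sm S" "R2 sm S"
    and frame: "A \<in> S" "B \<in> S" "graph 1 \<in> S"
  shows "S \<subseteq> standard_regulus"
proof
  fix X assume XS: "X \<in> S"
  show "X \<in> standard_regulus"
  proof (cases "X = B")
    case True thus ?thesis using B_in_standard_regulus by simp
  next
    case False
    have X: "subspace sm X" using Gr_subspace S(1) XS by blast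
    have XB: "distant X B" using S(2) XS frame(2) False unfolding R1_def by blast
    txt \<open>The transversal \<open>span {a, \<phi>(a)}\<close> meets \<open>A\<close>, \<open>B\<close> and \<open>graph 1\<close>, hence \<open>X\<close>.\<close>
    have "\<exists>k. a + k *s phi a \<in> X" if a: "a \<in> A" "a \<noteq> 0" for a
    proof -
      let ?L = "span {a, phi a}"
      have "transversal ?L" unfolding transversal_def using a span_base by blast
      hence "meets sm ?L A" "meets sm ?L B" "meets sm ?L (graph 1)"
        using transversal_meets[OF is_line_span_phi[OF a]] A_in_standard_regulus B_in_standard_regulus
          graph_in_standard_regulus[OF central_1] by blast+
      hence "meets sm ?L X"
        using S(3) frame frame_distinct[OF dim] XS is_line_span_phi[OF a] unfolding R2_def by blast
      then obtain p where p: "p \<noteq> 0" "p \<in> ?L" "p \<in> X" by (rule meetsE)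
      obtain r s where rs: "p = r *s a + s *s phi a" using p(2) span_pair by blast
      have "r \<noteq> 0"
      proof
        assume "r = 0"
        hence "p \<in> B" using rs phi_in_B[OF a(1)] by simp
        thus False using distant_inter[OF XB p(3)] p(1) by blast
      qed
      hence "inverse r *s p = a + (inverse r * s) *s phi a"
        using rs by (simp add: scale_right_distrib scale_scale[symmetric] scale_inverse_scale)
      thus ?thesis using subspace_scale[OF X p(3)] by metis
    qed
    thus ?thesis using complement_eq_graph[OF X XB _ dim] graph_in_standard_regulus by blast
  qed
qed

lemma standard_regulus_Z_regulus:
  assumes dim: "dim_gt_2 sm" shows "Z_regulus sm standard_regulus"
  unfolding Z_regulus_def
proof (intro conjI notI)
  show "standard_regulus \<subseteq> Gr sm" "R1 sm standard_regulus" "R2 sm standard_regulus"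
    by (fact standard_regulus_Gr R1_standard_regulus[OF dim] R2_standard_regulus)+
  assume "\<exists>S. standard_regulus \<subset> S \<and> S \<subseteq> Gr sm \<and> R1 sm S \<and> R2 sm S"
  then obtain S where S: "standard_regulus \<subset> S" "S \<subseteq> Gr sm" "R1 sm S" "R2 sm S" by blast
  have "A \<in> S" "B \<in> S" "graph 1 \<in> S"
    using S(1) A_in_standard_regulus B_in_standard_regulus graph_in_standard_regulus[OF central_1]
    by blast+
  thus False using standard_regulus_maximal[OF dim S(2-4)] S(1) by blast
qed

lemma Z_regulus_eq_standard_regulus:
  assumes dim: "dim_gt_2 sm" and R: "Z_regulus sm R" and frame: "A \<in> R" "B \<in> R" "graph 1 \<in> R"
  shows "R = standard_regulus"
proof -
  have R': "R \<subseteq> Gr sm" "R1 sm R" "R2 sm R"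
    and max: "\<not> (\<exists>S. R \<subset> S \<and> S \<subseteq> Gr sm \<and> R1 sm S \<and> R2 sm S)"
    using R unfolding Z_regulus_def by blast+
  have "R \<subseteq> standard_regulus" using standard_regulus_maximal[OF dim R' frame] .
  thus ?thesis using max standard_regulus_Gr R1_standard_regulus[OF dim] R2_standard_regulus by blast
qed

lemma frame_basis:
  assumes E: "independent E" "span E = A"
  shows "independent (E \<union> phi ` E)" "span (E \<union> phi ` E) = UNIV" "E \<inter> phi ` E = {}"
proof -
  have EA: "E \<subseteq> A" using span_superset[of E] E(2) by blast
  have spanB: "span (phi ` E) = B" using klinear_image_span[OF klinear_phi, of E] E(2) phi_A by simp
  hence phiE: "phi ` E \<subseteq> B" using span_superset by blast
  have "independent (phi ` E)" using independent_image[OF klinear_phi _ E(1)] inj_phi E(2) by simp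
  thus "independent (E \<union> phi ` E)"
    using independent_Un_distant[OF distant_AB subspace_A subspace_B E(1) EA] phiE by blast
  have "z \<in> span (E \<union> phi ` E)" for z
  proof -
    obtain x y where "x \<in> A" "y \<in> B" "z = x + y" using distantD[OF distant_AB] by blast
    thus ?thesis unfolding span_Un E(2) spanB by blast
  qed
  thus "span (E \<union> phi ` E) = UNIV" by blast
  show "E \<inter> phi ` E = {}"
  proof (rule equals0I)
    fix x assume x: "x \<in> E \<inter> phi ` E"
    hence "x \<in> A" "x \<in> B" using EA phiE by blast+
    hence "x = 0" by (rule distant_inter[OF distant_AB])
    thus False using x independent_zero[OF E(1)] by blast
  qed
qed

end

subsection \<open>Frames and their conjugacy\<close>

lemma card_of_Un_infinite_ordIso:
  assumes "infinite S" "|T| \<le>o |S|" shows "|S \<union> T| =o |S|"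
proof -
  have "|S \<union> T| \<le>o |S|"
    using card_of_Un_ordLeq_infinite_Field[of "|S|" S T] assms
    by (simp add: Field_card_of card_of_Card_order ordLeq_refl card_of_card_order_on)
  moreover have "|S| \<le>o |S \<union> T|" by (rule card_of_mono1) blast
  ultimately show ?thesis using ordIso_iff_ordLeq by blast
qed

text \<open>Cancellation of doubling: \<open>2\<kappa> = 2\<lambda>\<close> implies \<open>\<kappa> = \<lambda>\<close> for cardinals.\<close>
lemma bij_betw_cancel_double:
  assumes g: "bij_betw g (S0 \<union> T0) (S \<union> T)" and disj: "S0 \<inter> T0 = {}" "S \<inter> T = {}"
    and f0: "bij_betw f0 S0 T0" and f: "bij_betw f S T"
  shows "\<exists>h. bij_betw h S0 S"
proof (cases "finite S0")
  case True
  have "finite T0" using True bij_betw_finite[OF f0] by simp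
  hence "finite (S \<union> T)" using True bij_betw_finite[OF g] by simp
  hence fin: "finite S" "finite T" by simp_all
  have "card S0 + card T0 = card S + card T"
    using bij_betw_same_card[OF g] card_Un_disjoint[OF True \<open>finite T0\<close> disj(1)]
      card_Un_disjoint[OF fin disj(2)] by simp
  moreover have "card T0 = card S0" "card T = card S"
    using bij_betw_same_card[OF f0] bij_betw_same_card[OF f] by simp_all
  ultimately have "card S0 = card S" by simp
  thus ?thesis using True fin(1) finite_same_card_bij by blast
next
  case False
  have "infinite S"
  proof
    assume "finite S"
    hence "finite (S \<union> T)" using bij_betw_finite[OF f] by simp
    thus False using False bij_betw_finite[OF g] by simp
  qed
  have "|T0| \<le>o |S0|" "|T| \<le>o |S|"
    using card_of_ordIso[of S0 T0] card_of_ordIso[of S T] f0 f ordIso_iff_ordLeq by blast+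
  hence "|S0 \<union> T0| =o |S0|" "|S \<union> T| =o |S|"
    using card_of_Un_infinite_ordIso False \<open>infinite S\<close> by blast+
  moreover have "|S0 \<union> T0| =o |S \<union> T|" using g card_of_ordIso by blast
  ultimately have "|S0| =o |S|" using ordIso_symmetric ordIso_transitive by meson
  thus ?thesis using card_of_ordIso by blast
qed

context left_vector_space
begin

lemma frame_of_three:
  assumes A: "subspace sm A" and B: "subspace sm B" and C: "subspace sm C"
    and AB: "distant A B" and AC: "distant A C" and BC: "distant B C"
  shows "\<exists>phi. regulus_frame sm A B phi \<and> C = regulus_frame.graph sm A phi 1"
proof -
  let ?phi = "\<lambda>v. - proj B C v"
  note p = proj[OF BC B C] and p_eq = proj_eq[OF BC B C]
  have k: "klinear sm ?phi"
    using klinear_proj[OF BC B C] by (intro klinearI) (simp_all add: klinear_add klinear_scale scale_minus_right)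
  have "inj_on ?phi A"
  proof (rule klinear_inj_onI[OF k A])
    fix a assume "a \<in> A" "?phi a = 0"
    hence "a \<in> C" using p[of a] by simp
    thus "a = 0" using distant_inter[OF AC \<open>a \<in> A\<close>] by blast
  qed
  moreover have "?phi ` A = B"
  proof
    show "?phi ` A \<subseteq> B" using p subspace_neg[OF B] by blast
    show "B \<subseteq> ?phi ` A"
    proof
      fix b assume b: "b \<in> B"
      obtain a c where ac: "a \<in> A" "c \<in> C" "b = a + c" using distantD[OF AC] by blast
      have "proj B C (- a) = - b" using p_eq[of "- b" "- a"] subspace_neg[OF B b] ac by simp
      thus "b \<in> ?phi ` A" using subspace_neg[OF A ac(1)] by force
    qed
  qed
  ultimately have frame: "regulus_frame sm A B ?phi"
    using left_vs A B AB k by unfold_locales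
  have "C = {a + 1 *s ?phi a | a. a \<in> A}"
  proof
    show "C \<subseteq> {a + 1 *s ?phi a | a. a \<in> A}"
    proof
      fix c assume c: "c \<in> C"
      let ?a = "proj A B c"
      have a: "?a \<in> A" "c - ?a \<in> B" using proj[OF AB A B] by blast+
      have "proj B C ?a = - (c - ?a)" using p_eq subspace_neg[OF B a(2)] c by simp
      hence "c = ?a + 1 *s ?phi ?a" by simp
      thus "c \<in> {a + 1 *s ?phi a | a. a \<in> A}" using a(1) by blast
    qed
    show "{a + 1 *s ?phi a | a. a \<in> A} \<subseteq> C" using p by auto
  qed
  thus ?thesis using frame regulus_frame.graph_def[OF frame] by blast
qed

lemma frame_of_Gr:
  assumes "X \<in> Gr sm" shows "\<exists>Y phi. regulus_frame sm X Y phi"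
proof -
  obtain Y g where "subspace sm Y" "distant X Y" "klinear sm g" "inj_on g X" "g ` X = Y"
    using GrE[OF assms] by blast
  thus ?thesis using left_vs Gr_subspace[OF assms] by (intro exI) (unfold_locales)
qed

lemma frames_conjugate:
  assumes T0: "regulus_frame sm A0 B0 phi0" and T: "regulus_frame sm A B phi"
  shows "\<exists>F\<in>Aut sm. F ` A0 = A \<and> (\<forall>a\<in>A0. F (phi0 a) = phi (F a))"
proof -
  interpret T0: regulus_frame sm A0 B0 phi0 by (rule T0)
  interpret T: regulus_frame sm A B phi by (rule T)
  obtain E0 where E0: "independent E0" "span E0 = A0"
    using independent_extend_basis[OF T0.subspace_A independent_empty] by blast
  obtain E where E: "independent E" "span E = A"
    using independent_extend_basis[OF T.subspace_A independent_empty] by blast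
  have EA: "E0 \<subseteq> A0" "E \<subseteq> A" using span_superset[of E0] span_superset[of E] E0(2) E(2) by simp_all
  note V0 = T0.frame_basis[OF E0] and V = T.frame_basis[OF E]
  have phi0: "bij_betw phi0 E0 (phi0 ` E0)" and phi: "bij_betw phi E (phi ` E)"
    using inj_on_subset[OF T0.inj_phi EA(1)] inj_on_subset[OF T.inj_phi EA(2)]
    by (simp_all add: bij_betw_def)
  txt \<open>Both frames are of the form \<open>A \<oplus> \<phi>(A)\<close>, so bases of \<open>A0\<close> and \<open>A\<close> are equipotent.\<close>
  obtain g where "bij_betw g (E0 \<union> phi0 ` E0) (E \<union> phi ` E)"
    using bases_equipotent[OF V0(1) V(1)] V0(2) V(2) by auto
  then obtain h where h: "bij_betw h E0 E" using bij_betw_cancel_double[OF _ V0(3) V(3) phi0 phi] by blast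
  define H where "H x = (if x \<in> E0 then h x else phi (h (inv_into E0 phi0 x)))" for x
  have H_E0: "H e = h e" if "e \<in> E0" for e using that unfolding H_def by simp
  have H_phi0: "H x = (phi \<circ> h \<circ> inv_into E0 phi0) x" if "x \<in> phi0 ` E0" for x
    using that V0(3) unfolding H_def by auto
  have "bij_betw H E0 E" using bij_betw_cong[of E0 H h E] H_E0 h by simp
  moreover have "bij_betw H (phi0 ` E0) (phi ` E)"
    using bij_betw_cong[of "phi0 ` E0" H "phi \<circ> h \<circ> inv_into E0 phi0" "phi ` E"] H_phi0
      bij_betw_trans[OF bij_betw_trans[OF bij_betw_inv_into[OF phi0] h] phi] by (simp add: comp_assoc)
  ultimately have "bij_betw H (E0 \<union> phi0 ` E0) (E \<union> phi ` E)"
    using V(3) by (rule bij_betw_combine)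
  then obtain F where F: "F \<in> Aut sm" and FH: "\<And>e. e \<in> E0 \<union> phi0 ` E0 \<Longrightarrow> F e = H e"
    using Aut_extend_basis_bij[OF V0(1,2) V(1,2)] by blast
  have "F e = h e" if "e \<in> E0" for e using FH[of e] H_E0[OF that] that by simp
  hence "F ` E0 = h ` E0" by simp
  hence "F ` E0 = E" using bij_betw_imp_surj_on[OF h] by simp
  hence FA: "F ` A0 = A" using klinear_image_span[OF Aut_klinear[OF F], of E0] E0(2) E(2) by simp
  have "(F \<circ> phi0) a = (phi \<circ> F) a" if "a \<in> A0" for a
  proof (rule klinear_eq_on_span[of "F \<circ> phi0" "phi \<circ> F" E0])
    show "klinear sm (F \<circ> phi0)" "klinear sm (phi \<circ> F)"
      by (simp_all add: klinear_comp Aut_klinear[OF F] T0.klinear_phi T.klinear_phi)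
    show "(F \<circ> phi0) e = (phi \<circ> F) e" if e: "e \<in> E0" for e
    proof -
      have "inv_into E0 phi0 (phi0 e) = e" using inv_into_f_f[OF bij_betw_imp_inj_on[OF phi0] e] .
      thus ?thesis using FH[of "phi0 e"] FH[of e] H_E0[OF e] H_phi0[of "phi0 e"] e by simp
    qed
    show "a \<in> span E0" using that E0(2) by simp
  qed
  thus ?thesis using F FA by auto
qed

lemma standard_regulus_conjugate:
  assumes T0: "regulus_frame sm A0 B0 phi0" and T: "regulus_frame sm A B phi"
    and F: "F \<in> Aut sm" "F ` A0 = A" "\<And>a. a \<in> A0 \<Longrightarrow> F (phi0 a) = phi (F a)"
  shows "(\<lambda>X. F ` X) ` regulus_frame.standard_regulus sm A0 B0 phi0
    = regulus_frame.standard_regulus sm A B phi"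
proof -
  interpret T0: regulus_frame sm A0 B0 phi0 by (rule T0)
  interpret T: regulus_frame sm A B phi by (rule T)
  have "F ` B0 = (\<lambda>a. F (phi0 a)) ` A0" using T0.phi_A by (simp add: image_image[symmetric])
  also have "\<dots> = phi ` F ` A0" using F(3) by (simp add: image_image cong: image_cong)
  finally have FB: "F ` B0 = B" using F(2) T.phi_A by simp
  have "F ` T0.graph l = T.graph l" for l
  proof -
    have "F (a + l *s phi0 a) = F a + l *s phi (F a)" if "a \<in> A0" for a
      using klinear_add[OF Aut_klinear[OF F(1)]] klinear_scale[OF Aut_klinear[OF F(1)]] F(3)[OF that]
      by simp
    hence "F ` T0.graph l = (\<lambda>a. a + l *s phi a) ` F ` A0"
      unfolding T0.graph_def Setcompr_eq_image image_image by (rule image_cong[OF refl])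
    thus ?thesis unfolding T.graph_def F(2) Setcompr_eq_image .
  qed
  hence "(\<lambda>X. F ` X) ` {T0.graph l | l. T0.central l} = {T.graph l | l. T.central l}"
    unfolding T0.central_def T.central_def by auto
  thus ?thesis unfolding T0.standard_regulus_def T.standard_regulus_def using FB by simp
qed

lemma unique_Z_regulus_through_three:
  assumes dim: "dim_gt_2 sm" and A: "subspace sm A" and B: "subspace sm B" and C: "subspace sm C"
    and distant: "distant A B" "distant A C" "distant B C"
  shows "\<exists>!R. Z_regulus sm R \<and> A \<in> R \<and> B \<in> R \<and> C \<in> R"
proof -
  obtain phi where T: "regulus_frame sm A B phi" and C1: "C = regulus_frame.graph sm A phi 1"
    using frame_of_three[OF A B C distant] by blast
  interpret T: regulus_frame sm A B phi by (rule T)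
  show ?thesis
  proof (rule ex1I[of _ T.standard_regulus])
    show "Z_regulus sm T.standard_regulus \<and> A \<in> T.standard_regulus \<and> B \<in> T.standard_regulus \<and>
        C \<in> T.standard_regulus"
      using T.standard_regulus_Z_regulus[OF dim] T.A_in_standard_regulus T.B_in_standard_regulus
        T.graph_in_standard_regulus[OF T.central_1] C1 by simp
    show "R = T.standard_regulus" if "Z_regulus sm R \<and> A \<in> R \<and> B \<in> R \<and> C \<in> R" for R
      using T.Z_regulus_eq_standard_regulus[OF dim] that C1 by blast
  qed
qed

lemma Z_regulus_standard:
  assumes dim: "dim_gt_2 sm" and R: "Z_regulus sm R"
  shows "\<exists>A B phi. regulus_frame sm A B phi \<and> R = regulus_frame.standard_regulus sm A B phi"
proof -
  have RG: "R \<subseteq> Gr sm" and R1: "R1 sm R" using R unfolding Z_regulus_def by blast+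
  obtain A B C where ABC: "A \<in> R" "B \<in> R" "C \<in> R" "A \<noteq> B" "A \<noteq> C" "B \<noteq> C"
    using R1 unfolding R1_def by blast
  have "distant A B" "distant A C" "distant B C" using R1 ABC unfolding R1_def by blast+
  moreover have "subspace sm A" "subspace sm B" "subspace sm C" using RG ABC(1-3) Gr_subspace by blast+
  ultimately obtain phi where T: "regulus_frame sm A B phi" and C1: "C = regulus_frame.graph sm A phi 1"
    using frame_of_three by blast
  have "R = regulus_frame.standard_regulus sm A B phi"
    using regulus_frame.Z_regulus_eq_standard_regulus[OF T dim R ABC(1,2)] ABC(3) C1 by blast
  thus ?thesis using T by blast
qed

end

theorem corollary4p6:
  fixes sm :: "'k::division_ring \<Rightarrow> 'v::ab_group_add \<Rightarrow> 'v"
  assumes "left_vs sm" and "dim_gt_2 sm" and "Gr sm \<noteq> {}"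
  shows "(\<exists>R0. {R. Z_regulus sm R} = {(\<lambda>X. f ` X) ` R0 | f. f \<in> Aut sm}) \<and>
         (\<forall>A\<in>Gr sm. \<forall>B\<in>Gr sm. \<forall>C\<in>Gr sm.
            A \<noteq> B \<and> A \<noteq> C \<and> B \<noteq> C \<and> distant A B \<and> distant A C \<and> distant B C \<longrightarrow>
            (\<exists>!R. Z_regulus sm R \<and> A \<in> R \<and> B \<in> R \<and> C \<in> R))"
proof
  interpret left_vector_space sm by (rule left_vector_space.intro) (rule assms(1))
  obtain X where "X \<in> Gr sm" using assms(3) by blast
  then obtain Y phi where T0: "regulus_frame sm X Y phi" using frame_of_Gr by blast
  let ?R0 = "regulus_frame.standard_regulus sm X Y phi"
  have "Z_regulus sm R" if "R \<in> {(\<lambda>X. f ` X) ` ?R0 | f. f \<in> Aut sm}" for R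
    using that Z_regulus_image regulus_frame.standard_regulus_Z_regulus[OF T0 assms(2)] by blast
  moreover have "R \<in> {(\<lambda>X. f ` X) ` ?R0 | f. f \<in> Aut sm}" if Z: "Z_regulus sm R" for R
  proof -
    obtain A B psi where T: "regulus_frame sm A B psi" and R: "R = regulus_frame.standard_regulus sm A B psi"
      using Z_regulus_standard[OF assms(2) Z] by blast
    obtain F where "F \<in> Aut sm" "F ` X = A" "\<forall>a\<in>X. F (phi a) = psi (F a)"
      using frames_conjugate[OF T0 T] by blast
    thus ?thesis using standard_regulus_conjugate[OF T0 T] R by blast
  qed
  ultimately show "\<exists>R0. {R. Z_regulus sm R} = {(\<lambda>X. f ` X) ` R0 | f. f \<in> Aut sm}" by blast
next
  interpret left_vector_space sm by (rule left_vector_space.intro) (rule assms(1))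
  show "\<forall>A\<in>Gr sm. \<forall>B\<in>Gr sm. \<forall>C\<in>Gr sm.
          A \<noteq> B \<and> A \<noteq> C \<and> B \<noteq> C \<and> distant A B \<and> distant A C \<and> distant B C \<longrightarrow>
          (\<exists>!R. Z_regulus sm R \<and> A \<in> R \<and> B \<in> R \<and> C \<in> R)"
    using unique_Z_regulus_through_three[OF assms(2)] Gr_subspace by blast
qed

end
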